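(* Let $f:\mathbb{R}^n\to\mathbb{R}$ be strongly convex with constant $\mu>0$, and assume there exist scalars $M_1,M_2>0$ such that $\|v\|\le M_1\|x\|+M_2$ for all $x\in\mathbb{R}^n$ and all $v\in\partial f(x)$. Let $f^*$ be the optimal value of $\min_{x\in X}f(x)$. Run the random incremental penalty method with $s_k=\frac{2}{\mu k}$, $\delta_k=\frac{1}{k^d}$ with $d>1$, and $\gamma_k=\ln^g k$ with $g>0$, for all $k$. Define $\bar x_t^{\mathrm{av}}=\bar S_t^{-1}\sum_{k=1}^t s_k^{-1}x_k$ with $\bar S_t=\sum_{k=1}^t s_k^{-1}$. Then, as $t\to\infty$, $$\big|\mathbb{E}[f(\bar x_t^{\mathrm{av}})]-f^*\big|=O\!\left(\frac{\ln^{2g}t}{t}\right).$$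
   Context: Let $a_1,\dots,a_m\in\mathbb{R}^n$ be nonzero vectors ($m\ge2$) and $b_1,\dots,b_m\in\mathbb{R}$. Let $X_i=\{x\in\mathbb{R}^n:\langle a_i,x\rangle-b_i\le0\}$ and $X=\bigcap_{i=1}^m X_i$, assumed nonempty. Strong convexity with constant $\mu$ means $f(u)\ge f(v)+\langle g,u-v\rangle+\frac{\mu}{2}\|u-v\|^2$ for all $u,v$ and all $g\in\partial f(v)$. For $\delta>0$, a nonzero $a\in\mathbb{R}^n$ and $b\in\mathbb{R}$, define $h_\delta(x;a,b)=\frac{\langle a,x\rangle-b}{\|a\|}$ if $\langle a,x\rangle-b>\delta$, $h_\delta(x;a,b)=\frac{(\langle a,x\rangle-b+\delta)^2}{4\delta\|a\|}$ if $-\delta\le\langle a,x\rangle-b\le\delta$, and $0$ if $\langle a,x\rangle-b<-\delta$; its gradient is $\nabla h_\delta(x;a,b)=\frac{1}{\|a\|}p'_\delta(\langle a,x\rangle-b)\,a$, where $p'_\delta(s)=1$ for $s>\delta$, $\frac{s+\delta}{2\delta}$ for $|s|\le\delta$, $0$ for $s<-\delta$. Random incremental penalty method: given sequences $\{s_k\},\{\gamma_k\},\{\delta_k\}$ and a random initial point $x_1$ with $\mathbb{E}\|x_1\|^2<\infty$, for $k\ge1$ set $x_{k+1}=x_k-s_k\big[\tilde\nabla f(x_k)+\gamma_k\nabla h_{\delta_k}(x_k;a_{i_k},b_{i_k})\big]$, where $\tilde\nabla f(x_k)\in\partial f(x_k)$ and $i_k$ is drawn uniformly at random from $\{1,\dots,m\}$,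 independently of $x_1,i_1,\dots,i_{k-1}$. *)

theory Defs
  imports "HOL-Probability.Probability" "HOL-Library.Landau_Symbols"
begin

definition subdifferential :: "('a::euclidean_space \<Rightarrow> real) \<Rightarrow> 'a \<Rightarrow> 'a set" where
  "subdifferential f x = {g. \<forall>y. f y \<ge> f x + inner g (y - x)}"

definition strongly_convex_const :: "('a::euclidean_space \<Rightarrow> real) \<Rightarrow> real \<Rightarrow> bool" where
  "strongly_convex_const f \<mu> \<longleftrightarrow>
     (\<forall>u v. \<forall>g\<in>subdifferential f v. f u \<ge> f v + inner g (u - v) + \<mu> / 2 * (norm (u - v))\<^sup>2)"

definition pdelta' :: "real \<Rightarrow> real \<Rightarrow> real" where
  "pdelta' \<delta> s = (if s > \<delta> then 1 else if s < - \<delta> then 0 else (s + \<delta>) / (2 * \<delta>))"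

definition hdelta :: "real \<Rightarrow> 'a::euclidean_space \<Rightarrow> 'a \<Rightarrow> real \<Rightarrow> real" where
  "hdelta \<delta> x a b =
     (let s = inner a x - b in
      if s > \<delta> then s / norm a
      else if s < - \<delta> then 0
      else (s + \<delta>)\<^sup>2 / (4 * \<delta> * norm a))"

definition hdelta_grad :: "real \<Rightarrow> 'a::euclidean_space \<Rightarrow> 'a \<Rightarrow> real \<Rightarrow> 'a" where
  "hdelta_grad \<delta> x a b = (pdelta' \<delta> (inner a x - b) / norm a) *\<^sub>R a"

end

theory Submission
  imports Defs
begin

text \<open>
  Since the indices \<open>i 1, \<dots>, i t\<close> are uniform and independent of \<open>x 1\<close>, the expectation of any
  function of \<open>(x 1, i 1, \<dots>, i t)\<close> is the expectation over \<open>x 1\<close> of its average over all \<open>m ^ t\<close>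
  index sequences; the analysis is therefore carried out for a fixed starting point \<open>\<xi>\<close> with these
  finite averages.

  Strong convexity gives a minimiser \<open>xopt\<close> of \<open>f\<close> on the polyhedron, and a separation and Farkas
  argument gives an exact penalty \<open>f xopt \<le> f x + \<Lambda> * (\<Sum>j<m. max 0 (inner (a j) x - b j))\<close>.
  Averaging the one-step inequality for \<open>(norm (x k - xopt))\<^sup>2\<close> over the uniformly chosen constraint
  gives \<open>e (k + 1) \<le> (1 - 2 / k + A / k\<^sup>2) * e k + \<beta> / k\<close> for the mean square distance \<open>e\<close>,
  which keeps it below \<open>K * (1 + (norm \<xi>)\<^sup>2)\<close>. With the weights \<open>1 / s k = \<mu> * k / 2\<close> the
  distance terms telescope, and Jensen's inequality bounds the value at the weighted average above by
  \<open>f xopt + O(ln t powr (2 * g) / t)\<close>. From below, the exact penalty reduces the deficit to the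
  weighted penalty, which is dominated by the same weighted gap once \<open>\<gamma> k\<close> exceeds \<open>\<Lambda>\<close>.
\<close>

lemma le_one_plus_square: "(x::real) \<le> 1 + x\<^sup>2"
  using zero_le_power2[of "x - 1 / 2"] by (simp add: power2_eq_square algebra_simps)

lemma square_sum_le: "((x::real) + y)\<^sup>2 \<le> 2 * (x\<^sup>2 + y\<^sup>2)"
  using zero_le_power2[of "x - y"] by (simp add: power2_eq_square algebra_simps)

lemma square_sum3_le: "((x::real) + y + z)\<^sup>2 \<le> 3 * (x\<^sup>2 + y\<^sup>2 + z\<^sup>2)"
  using sum_power2_ge_zero[of "x - y" "y - z"] zero_le_power2[of "x - z"]
  by (simp add: power2_eq_square algebra_simps)

lemma norm_diff_scaleR_square:
  fixes u v :: "'a::real_inner"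
  shows "(norm (u - t *\<^sub>R v))\<^sup>2 = (norm u)\<^sup>2 - 2 * t * inner v u + t\<^sup>2 * (norm v)\<^sup>2"
  unfolding power2_norm_eq_inner
  by (simp add: inner_diff_left inner_diff_right inner_commute power2_eq_square algebra_simps)

lemma quadratic_le_linear_imp_le:
  fixes r A B c :: real
  assumes "c > 0" "r \<ge> 0" "A \<ge> 0" "B \<ge> 0" "c * r\<^sup>2 \<le> A + B * r"
  shows "r \<le> max 1 ((A + B) / c)"
proof (cases "r \<le> 1")
  case False
  then have "c * r * r \<le> (A + B) * r"
    using assms mult_left_mono[of 1 r A] by (simp add: power2_eq_square distrib_right)
  then have "r * c \<le> A + B" using False by (simp add: mult_le_cancel_right mult.commute)
  then have "r \<le> (A + B) / c" using assms by (simp add: pos_le_divide_eq)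
  then show ?thesis by simp
qed simp

lemma perturbed_contraction_step:
  fixes r A e e' V \<beta> :: real
  assumes r: "1 \<le> r" and A: "0 \<le> A" and e: "0 \<le> e" "e \<le> V" and \<beta>: "0 \<le> \<beta>" "\<beta> \<le> V"
    and rec: "e' \<le> (1 - 2 / r + A / r\<^sup>2) * e + \<beta> / r"
  shows "e' \<le> (if A \<le> r then V else (2 + A) * V)"
proof (cases "A \<le> r")
  case True
  have "A / r\<^sup>2 \<le> 1 / r" using True r by (simp add: power2_eq_square divide_simps)
  then have "(1 - 2 / r + A / r\<^sup>2) * e \<le> (1 - 1 / r) * e" using e by (intro mult_right_mono) auto
  then have "e' \<le> (1 - 1 / r) * e + \<beta> / r" using rec by linarith
  also have "\<dots> \<le> (1 - 1 / r) * V + V / r" using e \<beta> r by (intro add_mono mult_left_mono divide_right_mono) auto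
  finally show ?thesis using True r by (simp add: field_simps)
next
  case False
  have "A / r\<^sup>2 \<le> A / 1" using A r by (intro divide_left_mono) (auto simp: one_le_power)
  moreover have "0 \<le> 2 / r" using r by simp
  ultimately have "1 - 2 / r + A / r\<^sup>2 \<le> 1 + A" by linarith
  then have "(1 - 2 / r + A / r\<^sup>2) * e \<le> (1 + A) * e" using e by (intro mult_right_mono) auto
  moreover have "\<beta> / r \<le> \<beta> / 1" using \<beta> r by (intro divide_left_mono) auto
  ultimately have "e' \<le> (1 + A) * e + \<beta>" using rec by simp
  also have "\<dots> \<le> (1 + A) * V + V" using e \<beta> A by (intro add_mono mult_left_mono) auto
  finally show ?thesis using False by (simp add: algebra_simps)
qed

text \<open>While \<open>k < A\<close> the bound may grow by the factor \<open>2 + A\<close> per step; afterwards the coefficient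
  is at most \<open>1 - 1/k\<close> and the bound is preserved.\<close>
lemma perturbed_contraction_bounded:
  fixes e :: "nat \<Rightarrow> real"
  assumes A: "0 \<le> A" and \<beta>: "0 \<le> \<beta>" and nonneg: "\<And>k. 1 \<le> k \<Longrightarrow> 0 \<le> e k"
    and rec: "\<And>k. 1 \<le> k \<Longrightarrow> k \<le> T \<Longrightarrow> e (Suc k) \<le> (1 - 2 / real k + A / (real k)\<^sup>2) * e k + \<beta> / real k"
    and k: "1 \<le> k" "k \<le> Suc T"
  shows "e k \<le> (2 + A) ^ (nat \<lceil>A\<rceil> + 1) * (e 1 + \<beta>)"
proof -
  define V where "V k = (2 + A) ^ min (k - 1) (nat \<lceil>A\<rceil> + 1) * (e 1 + \<beta>)" for k
  have e1_\<beta>_le_V: "e 1 + \<beta> \<le> V k" for k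
    unfolding V_def using A \<beta> nonneg[of 1] by (simp add: mult_le_cancel_right1 one_le_power)
  have V_mono: "V k \<le> V l" if "k \<le> l" for k l
    unfolding V_def using A \<beta> nonneg[of 1] that
    by (intro mult_right_mono power_increasing) auto
  have "e k \<le> V k" if "1 \<le> k" "k \<le> Suc T" for k
    using that
  proof (induction k)
    case (Suc k)
    show ?case
    proof (cases "k = 0")
      case True
      then show ?thesis using \<beta> by (simp add: V_def)
    next
      case False
      then have k: "1 \<le> k" "k \<le> T" using Suc.prems by auto
      have step: "e (Suc k) \<le> (if A \<le> real k then V k else (2 + A) * V k)"
        using k Suc.IH e1_\<beta>_le_V[of k] nonneg[of 1] nonneg[of k]
        by (intro perturbed_contraction_step[OF _ A _ _ \<beta> _ rec]) auto
      show ?thesis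
      proof (cases "A \<le> real k")
        case True
        then show ?thesis using step V_mono[of k "Suc k"] by simp
      next
        case False
        then have "k - 1 < nat \<lceil>A\<rceil> + 1" by linarith
        then have "V (Suc k) = (2 + A) * V k" using k by (cases k) (simp_all add: V_def)
        then show ?thesis using step False by simp
      qed
    qed
  qed simp
  also have "V k \<le> (2 + A) ^ (nat \<lceil>A\<rceil> + 1) * (e 1 + \<beta>)"
    unfolding V_def using A \<beta> nonneg[of 1] by (intro mult_right_mono power_increasing) auto
  finally show ?thesis using k by simp
qed

section \<open>Strongly convex functions and exact penalties\<close>

lemma strongly_convex_constD:
  "strongly_convex_const f \<mu> \<Longrightarrow> g \<in> subdifferential f v \<Longrightarrow>
    f v + inner g (u - v) + \<mu> / 2 * (norm (u - v))\<^sup>2 \<le> f u"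
  unfolding strongly_convex_const_def by blast

lemma subgradient_convex_on:
  fixes f :: "'a::euclidean_space \<Rightarrow> real"
  assumes sub: "\<And>y. sg y \<in> subdifferential f y"
  shows "convex_on UNIV f"
proof (rule convex_onI)
  fix t :: real and x y :: 'a
  assume t: "0 < t" "t < 1"
  define z where "z = (1 - t) *\<^sub>R x + t *\<^sub>R y"
  have "f z + inner (sg z) (x - z) \<le> f x" "f z + inner (sg z) (y - z) \<le> f y"
    using sub[of z] by (auto simp: subdifferential_def)
  then have "(1 - t) * (f z + inner (sg z) (x - z)) + t * (f z + inner (sg z) (y - z))
      \<le> (1 - t) * f x + t * f y"
    using t by (intro add_mono mult_left_mono) auto
  moreover have "(1 - t) * inner (sg z) (x - z) + t * inner (sg z) (y - z) = 0"
    by (simp add: z_def inner_diff_right inner_add_right algebra_simps)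
  ultimately show "f z \<le> (1 - t) * f x + t * f y" by (simp add: algebra_simps)
qed auto

text \<open>Strong convexity makes sublevel sets bounded.\<close>
lemma strongly_convex_attains_min:
  fixes f :: "'a::euclidean_space \<Rightarrow> real"
  assumes sconv: "strongly_convex_const f \<mu>" and "0 < \<mu>" and g0: "g0 \<in> subdifferential f 0"
    and cont: "continuous_on UNIV f" and "closed C" and y0: "y0 \<in> C"
  shows "\<exists>z\<in>C. \<forall>y\<in>C. f z \<le> f y"
proof -
  define S where "S = C \<inter> {y. f y \<le> f y0}"
  have "norm y \<le> max 1 ((\<bar>f y0 - f 0\<bar> + norm g0) / (\<mu> / 2))" if "y \<in> S" for y
  proof (rule quadratic_le_linear_imp_le)
    have "f 0 + inner g0 y + \<mu> / 2 * (norm y)\<^sup>2 \<le> f y0"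
      using strongly_convex_constD[OF sconv g0, of y] that by (simp add: S_def)
    moreover have "- (norm g0 * norm y) \<le> inner g0 y"
      using norm_cauchy_schwarz[of g0 "- y"] by simp
    ultimately show "\<mu> / 2 * (norm y)\<^sup>2 \<le> \<bar>f y0 - f 0\<bar> + norm g0 * norm y" by linarith
  qed (use \<open>0 < \<mu>\<close> in auto)
  then have "bounded S" unfolding bounded_iff by blast
  moreover have "closed S"
    unfolding S_def by (intro closed_Int \<open>closed C\<close> closed_Collect_le cont continuous_on_const)
  moreover have "y0 \<in> S" using y0 by (simp add: S_def)
  ultimately obtain z where "z \<in> S" "\<forall>y\<in>S. f z \<le> f y"
    using continuous_attains_inf[of S f] continuous_on_subset[OF cont]
    by (auto simp: compact_eq_bounded_closed)
  then show ?thesis by (force simp: S_def)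
qed

lemma separating_hyperplane_epigraph:
  fixes f :: "'a::euclidean_space \<Rightarrow> real"
  assumes f: "convex_on UNIV f" and C: "convex C" and z: "z \<in> C"
    and min: "\<And>y. y \<in> C \<Longrightarrow> f z \<le> f y"
  obtains \<beta> w c where "\<beta> < 0" "\<And>x. inner w x + \<beta> * f x \<le> c"
    "\<And>y r. y \<in> C \<Longrightarrow> r < f z \<Longrightarrow> c \<le> inner w y + \<beta> * r"
proof -
  have "convex (epigraph UNIV f)" using f by (simp add: convex_epigraph)
  moreover have "convex (C \<times> {..<f z})" using C by (intro convex_Times) auto
  moreover have "epigraph UNIV f \<noteq> {}" by (auto simp: epigraph_def)
  moreover have "C \<times> {..<f z} \<noteq> {}" using z by auto
  moreover have "epigraph UNIV f \<inter> (C \<times> {..<f z}) = {}"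
    by (auto simp: epigraph_def dest!: min)
  ultimately obtain w0 c where w0: "w0 \<noteq> 0"
    and epi: "\<forall>p\<in>epigraph UNIV f. inner w0 p \<le> c" and below: "\<forall>p\<in>C \<times> {..<f z}. c \<le> inner w0 p"
    using separating_hyperplane_sets by metis
  obtain w \<beta> where w0_eq: "w0 = (w, \<beta>)" by (cases w0)
  have epi': "inner w x + \<beta> * r \<le> c" if "f x \<le> r" for x r
    using epi that by (auto simp: w0_eq epigraph_def)
  \<comment> \<open>the hyperplane faces downwards: the epigraph projects onto the whole space and is unbounded above\<close>
  have "\<beta> < 0"
  proof (rule ccontr)
    assume "\<not> \<beta> < 0"
    show False
    proof (cases "\<beta> = 0")
      case True
      then have "w \<noteq> 0" using w0 by (auto simp: w0_eq zero_prod_def)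
      then have "inner w (((\<bar>c\<bar> + 1) / (norm w)\<^sup>2) *\<^sub>R w) = \<bar>c\<bar> + 1"
        by (simp add: power2_norm_eq_inner)
      then show False using epi'[OF order_refl, of "((\<bar>c\<bar> + 1) / (norm w)\<^sup>2) *\<^sub>R w"] True by simp
    next
      case False
      with \<open>\<not> \<beta> < 0\<close> have "\<beta> > 0" by simp
      then have "\<beta> * ((c + 1) / \<beta>) \<le> \<beta> * max (f 0) ((c + 1) / \<beta>)"
        by (intro mult_left_mono) auto
      then have "c + 1 \<le> \<beta> * max (f 0) ((c + 1) / \<beta>)" using \<open>\<beta> > 0\<close> by simp
      then show False using epi'[of 0 "max (f 0) ((c + 1) / \<beta>)"] by simp
    qed
  qed
  moreover have "c \<le> inner w y + \<beta> * r" if "y \<in> C" "r < f z" for y r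
    using below that by (auto simp: w0_eq)
  ultimately show ?thesis using that epi'[OF order_refl] by blast
qed

lemma convex_minimum_normal_vector:
  fixes f :: "'a::euclidean_space \<Rightarrow> real"
  assumes f: "convex_on UNIV f" and C: "convex C" and z: "z \<in> C"
    and min: "\<And>y. y \<in> C \<Longrightarrow> f z \<le> f y"
  shows "\<exists>v. (\<forall>x. f z - inner v (x - z) \<le> f x) \<and> (\<forall>y\<in>C. inner v (y - z) \<le> 0)"
proof -
  obtain \<beta> w c where "\<beta> < 0" and epi': "\<And>x. inner w x + \<beta> * f x \<le> c"
    and below': "\<And>y r. y \<in> C \<Longrightarrow> r < f z \<Longrightarrow> c \<le> inner w y + \<beta> * r"
    using separating_hyperplane_epigraph[OF assms] by metis
  define v where "v = (1 / \<beta>) *\<^sub>R w"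
  have upper: "c / \<beta> \<le> inner v x + f x" for x
    using epi'[of x] \<open>\<beta> < 0\<close> by (simp add: v_def field_simps)
  have lower: "inner v y + f z \<le> c / \<beta>" if "y \<in> C" for y
  proof -
    have "f z \<le> c / \<beta> - inner v y"
    proof (rule dense_le)
      fix r assume "r < f z"
      then show "r \<le> c / \<beta> - inner v y"
        using below'[OF \<open>y \<in> C\<close> \<open>r < f z\<close>] \<open>\<beta> < 0\<close> by (simp add: v_def field_simps)
    qed
    then show ?thesis by simp
  qed
  show ?thesis
  proof (intro exI conjI allI ballI)
    show "f z - inner v (x - z) \<le> f x" for x
      using upper[of x] lower[OF z] by (simp add: inner_diff_right)
    show "inner v (y - z) \<le> 0" if "y \<in> C" for y
      using upper[of z] lower[OF that] by (simp add: inner_diff_right)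
  qed
qed

definition violation :: "nat \<Rightarrow> (nat \<Rightarrow> 'a::real_inner) \<Rightarrow> (nat \<Rightarrow> real) \<Rightarrow> 'a \<Rightarrow> real" where
  "violation m a b x = (\<Sum>j<m. max 0 (inner (a j) x - b j))"

lemma le_violation: "j < m \<Longrightarrow> inner (a j) x - b j \<le> violation m a b x"
  unfolding violation_def
  by (rule order_trans[OF max.cobounded2 member_le_sum[of j "{..<m}" "\<lambda>j. max 0 (inner (a j) x - b j)"]]) auto

lemma convex_on_violation: "convex_on UNIV (violation m a b)"
proof (rule convex_onI)
  fix t :: real and x y :: 'a
  assume t: "0 < t" "t < 1"
  have "max 0 (inner (a j) ((1 - t) *\<^sub>R x + t *\<^sub>R y) - b j)
      \<le> (1 - t) * max 0 (inner (a j) x - b j) + t * max 0 (inner (a j) y - b j)" for j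
  proof -
    have "inner (a j) ((1 - t) *\<^sub>R x + t *\<^sub>R y) - b j
        = (1 - t) * (inner (a j) x - b j) + t * (inner (a j) y - b j)"
      by (simp add: inner_add_right algebra_simps)
    moreover have "(1 - t) * (inner (a j) x - b j) \<le> (1 - t) * max 0 (inner (a j) x - b j)"
      and "t * (inner (a j) y - b j) \<le> t * max 0 (inner (a j) y - b j)"
      using t by (intro mult_left_mono; simp)+
    moreover have "0 \<le> (1 - t) * max 0 (inner (a j) x - b j)" "0 \<le> t * max 0 (inner (a j) y - b j)"
      using t by simp_all
    ultimately show ?thesis by (intro max.boundedI) linarith+
  qed
  then have "violation m a b ((1 - t) *\<^sub>R x + t *\<^sub>R y)
      \<le> (\<Sum>j<m. (1 - t) * max 0 (inner (a j) x - b j) + t * max 0 (inner (a j) y - b j))"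
    unfolding violation_def by (intro sum_mono)
  also have "\<dots> = (1 - t) * violation m a b x + t * violation m a b y"
    by (simp add: violation_def sum.distrib sum_distrib_left)
  finally show "violation m a b ((1 - t) *\<^sub>R x + t *\<^sub>R y) \<le> (1 - t) * violation m a b x + t * violation m a b y" .
qed auto

lemma polyhedron_feasible_direction:
  fixes a :: "nat \<Rightarrow> 'a::real_inner"
  assumes z: "\<forall>j<m. inner (a j) z \<le> b j"
    and active: "\<And>j. j < m \<Longrightarrow> inner (a j) z = b j \<Longrightarrow> inner (a j) u \<le> 0"
  shows "\<exists>\<tau>>0. \<forall>j<m. inner (a j) (z + \<tau> *\<^sub>R u) \<le> b j"
proof -
  define inactive where "inactive = {j. j < m \<and> inner (a j) z \<noteq> b j}"
  have "\<forall>\<^sub>F \<tau> in at_right (0::real). \<forall>j\<in>inactive. \<tau> * inner (a j) u < b j - inner (a j) z"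
  proof (intro eventually_ball_finite ballI)
    fix j assume "j \<in> inactive"
    then have "0 < b j - inner (a j) z" using z by (auto simp: inactive_def le_less)
    moreover have "((\<lambda>\<tau>. \<tau> * inner (a j) u) \<longlongrightarrow> 0 * inner (a j) u) (at_right 0)"
      by (intro tendsto_intros)
    ultimately show "\<forall>\<^sub>F \<tau> in at_right 0. \<tau> * inner (a j) u < b j - inner (a j) z"
      by (simp add: order_tendstoD(2))
  qed (simp add: inactive_def)
  with eventually_at_right_less have "\<forall>\<^sub>F \<tau> in at_right (0::real).
      0 < \<tau> \<and> (\<forall>j\<in>inactive. \<tau> * inner (a j) u < b j - inner (a j) z)"
    by (rule eventually_conj)
  then obtain \<tau> where \<tau>: "0 < \<tau>" "\<forall>j\<in>inactive. \<tau> * inner (a j) u < b j - inner (a j) z"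
    using eventually_happens trivial_limit_at_right_real by blast
  have "inner (a j) (z + \<tau> *\<^sub>R u) \<le> b j" if "j < m" for j
  proof (cases "j \<in> inactive")
    case False
    then show ?thesis
      using that active[of j] \<tau>(1) mult_left_mono[of "inner (a j) u" 0 \<tau>]
      by (simp add: inactive_def inner_add_right)
  qed (use \<tau>(2) in \<open>auto simp: inner_add_right\<close>)
  then show ?thesis using \<tau>(1) by blast
qed

lemma normal_cone_polyhedron:
  fixes a :: "nat \<Rightarrow> 'a::euclidean_space"
  assumes z: "\<forall>j<m. inner (a j) z \<le> b j"
    and v: "\<And>y. \<forall>j<m. inner (a j) y \<le> b j \<Longrightarrow> inner v (y - z) \<le> 0"
  shows "v \<in> convex_cone hull (a ` {j. j < m \<and> inner (a j) z = b j})"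
proof (rule ccontr)
  define K where "K = convex_cone hull (a ` {j. j < m \<and> inner (a j) z = b j})"
  assume "v \<notin> K"
  moreover have "convex K" "closed K"
    unfolding K_def by (auto intro: convex_convex_cone_hull closed_convex_cone_hull)
  ultimately obtain u c where uv: "inner u v < c" and uK: "\<forall>x\<in>K. c < inner u x"
    using separating_hyperplane_closed_point by blast
  have "0 \<in> K" unfolding K_def by (rule convex_cone_hull_contains_0)
  then have "c < 0" using uK by auto
  have u_K_nonneg: "0 \<le> inner u x" if "x \<in> K" for x
  proof (rule ccontr)
    assume neg: "\<not> 0 \<le> inner u x"
    have "(c / inner u x) *\<^sub>R x \<in> K"
      using that neg \<open>c < 0\<close> conic_convex_cone_hull unfolding K_def
      by (intro conicD) (auto simp: divide_nonpos_neg)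
    moreover have "inner u ((c / inner u x) *\<^sub>R x) = c" using neg by simp
    ultimately show False using uK by (metis less_irrefl)
  qed
  have "inner (a j) (- u) \<le> 0" if "j < m" "inner (a j) z = b j" for j
    using that u_K_nonneg[of "a j"] unfolding K_def by (auto intro: hull_inc simp: inner_commute)
  \<comment> \<open>moving from \<open>z\<close> a little in direction \<open>-u\<close> keeps all constraints, yet increases \<open>inner v\<close>\<close>
  then obtain \<tau> where "0 < \<tau>" "\<forall>j<m. inner (a j) (z + \<tau> *\<^sub>R - u) \<le> b j"
    using polyhedron_feasible_direction[OF z] by blast
  with v have "0 \<le> \<tau> * inner v u" by fastforce
  then show False using uv \<open>c < 0\<close> \<open>0 < \<tau>\<close> by (simp add: inner_commute zero_le_mult_iff)
qed

lemma active_cone_le_violation: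
  fixes a :: "nat \<Rightarrow> 'a::euclidean_space"
  assumes "w \<in> convex_cone hull (a ` {j. j < m \<and> inner (a j) z = b j})"
  shows "\<exists>l\<ge>0. \<forall>x. inner w (x - z) \<le> l * violation m a b x"
proof -
  define P where "P = {w. \<exists>l\<ge>0. \<forall>x. inner w (x - z) \<le> l * violation m a b x}"
  have "a ` {j. j < m \<and> inner (a j) z = b j} \<subseteq> P"
    by (auto simp: P_def inner_diff_right intro!: exI[of _ 1] le_violation)
  moreover have "convex_cone P"
    unfolding convex_cone_iff
  proof (intro conjI ballI allI impI)
    show "0 \<in> P" unfolding P_def by auto
    show "w1 + w2 \<in> P" if "w1 \<in> P" "w2 \<in> P" for w1 w2
    proof -
      obtain l1 where "0 \<le> l1" "\<forall>x. inner w1 (x - z) \<le> l1 * violation m a b x"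
        using \<open>w1 \<in> P\<close> unfolding P_def by blast
      moreover obtain l2 where "0 \<le> l2" "\<forall>x. inner w2 (x - z) \<le> l2 * violation m a b x"
        using \<open>w2 \<in> P\<close> unfolding P_def by blast
      ultimately show ?thesis unfolding P_def
        by (intro CollectI exI[of _ "l1 + l2"]) (auto simp: inner_add_left distrib_right add_mono)
    qed
    show "c *\<^sub>R w \<in> P" if "w \<in> P" "0 \<le> c" for w c
    proof -
      obtain l where "0 \<le> l" "\<forall>x. inner w (x - z) \<le> l * violation m a b x"
        using \<open>w \<in> P\<close> unfolding P_def by blast
      then show ?thesis unfolding P_def using \<open>0 \<le> c\<close>
        by (intro CollectI exI[of _ "c * l"]) (auto simp: mult.assoc mult_left_mono)
    qed
  qed
  ultimately have "convex_cone hull (a ` {j. j < m \<and> inner (a j) z = b j}) \<subseteq> P"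
    by (rule hull_minimal)
  then show ?thesis using assms unfolding P_def by blast
qed

theorem exact_penalty:
  fixes f :: "'a::euclidean_space \<Rightarrow> real"
  assumes f: "convex_on UNIV f" and z: "\<forall>j<m. inner (a j) z \<le> b j"
    and min: "\<And>y. \<forall>j<m. inner (a j) y \<le> b j \<Longrightarrow> f z \<le> f y"
  shows "\<exists>\<Lambda>\<ge>0. \<forall>x. f z \<le> f x + \<Lambda> * violation m a b x"
proof -
  define C where "C = {y. \<forall>j<m. inner (a j) y \<le> b j}"
  have "C = (\<Inter>j<m. {y. inner (a j) y \<le> b j})" by (auto simp: C_def)
  then have "convex C" by (simp add: convex_INT convex_halfspace_le)
  moreover have "z \<in> C" using z by (simp add: C_def)
  ultimately obtain v where v_sub: "\<And>x. f z - inner v (x - z) \<le> f x"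
    and "\<forall>y\<in>C. inner v (y - z) \<le> 0"
    using convex_minimum_normal_vector[OF f, of C z] min by (auto simp: C_def)
  then have v_normal: "\<And>y. \<forall>j<m. inner (a j) y \<le> b j \<Longrightarrow> inner v (y - z) \<le> 0"
    by (simp add: C_def)
  obtain \<Lambda> where "0 \<le> \<Lambda>" and \<Lambda>: "\<And>x. inner v (x - z) \<le> \<Lambda> * violation m a b x"
    using active_cone_le_violation[OF normal_cone_polyhedron[OF z v_normal]] by blast
  moreover have "f z \<le> f x + \<Lambda> * violation m a b x" for x
    using v_sub[of x] \<Lambda>[of x] by linarith
  ultimately show ?thesis by blast
qed

section \<open>The smoothed penalty\<close>

definition pdelta :: "real \<Rightarrow> real \<Rightarrow> real" where
  "pdelta \<delta> s = (if s > \<delta> then s else if s < - \<delta> then 0 else (s + \<delta>)\<^sup>2 / (4 * \<delta>))"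

lemma hdelta_eq_pdelta: "hdelta \<delta> x a b = pdelta \<delta> (inner a x - b) / norm a"
  by (simp add: hdelta_def pdelta_def Let_def)

lemma pdelta_nonneg: "0 < \<delta> \<Longrightarrow> 0 \<le> pdelta \<delta> s"
  by (auto simp: pdelta_def)

lemma pos_part_le_pdelta: "0 < \<delta> \<Longrightarrow> max 0 s \<le> pdelta \<delta> s"
  using zero_le_power2[of "s - \<delta>"] zero_le_power2[of "s + \<delta>"]
  by (auto simp: pdelta_def pos_le_divide_eq power2_eq_square algebra_simps)

lemma pdelta_le_of_nonpos: "0 < \<delta> \<Longrightarrow> s \<le> 0 \<Longrightarrow> pdelta \<delta> s \<le> \<delta> / 4"
  using power_mono[of "s + \<delta>" \<delta> 2] by (auto simp: pdelta_def divide_simps power2_eq_square)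

lemma pdelta_le_abs_add:
  assumes "0 < \<delta>"
  shows "pdelta \<delta> s \<le> \<bar>s\<bar> + \<delta>"
proof (cases "- \<delta> \<le> s \<and> s \<le> \<delta>")
  case True
  have "(s + \<delta>) * (s + \<delta>) \<le> (s + \<delta>) * (2 * \<delta>)" using True by (intro mult_left_mono) auto
  also have "\<dots> \<le> (\<bar>s\<bar> + \<delta>) * (4 * \<delta>)"
  proof -
    have "\<delta> * s \<le> \<delta> * \<bar>s\<bar>" "0 \<le> \<delta> * \<bar>s\<bar>" "0 \<le> \<delta> * \<delta>"
      using assms by (auto intro: mult_left_mono)
    moreover have "(s + \<delta>) * (2 * \<delta>) = 2 * (\<delta> * s) + 2 * (\<delta> * \<delta>)"
      and "(\<bar>s\<bar> + \<delta>) * (4 * \<delta>) = 4 * (\<delta> * \<bar>s\<bar>) + 4 * (\<delta> * \<delta>)"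
      by (simp_all add: algebra_simps)
    ultimately show ?thesis by linarith
  qed
  finally show ?thesis using True assms by (simp add: pdelta_def pos_divide_le_eq power2_eq_square)
qed (use assms in \<open>auto simp: pdelta_def\<close>)

lemma pdelta_subgradient_ineq:
  assumes "0 < \<delta>"
  shows "pdelta \<delta> s + pdelta' \<delta> s * (t - s) \<le> pdelta \<delta> t"
proof -
  consider "s > \<delta>" | "s < - \<delta>" | "- \<delta> \<le> s" "s \<le> \<delta>" by linarith
  then show ?thesis
  proof cases
    case 1
    then show ?thesis using pos_part_le_pdelta[OF assms, of t] by (simp add: pdelta_def pdelta'_def)
  next
    case 2
    then show ?thesis using pdelta_nonneg[OF assms, of t] assms by (simp add: pdelta_def pdelta'_def)
  next
    case 3
    have tangent: "pdelta \<delta> s + pdelta' \<delta> s * (t - s) = (s + \<delta>) * (2 * t - s + \<delta>) / (4 * \<delta>)"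
      using 3 assms by (simp add: pdelta_def pdelta'_def field_simps power2_eq_square)
    have "(s + \<delta>) * (2 * t - s + \<delta>) \<le> 4 * \<delta> * pdelta \<delta> t"
    proof -
      consider "t > \<delta>" | "t < - \<delta>" | "- \<delta> \<le> t" "t \<le> \<delta>" by linarith
      then show ?thesis
      proof cases
        case 1
        have "0 \<le> (\<delta> - s) * (2 * t - s - \<delta>)" using 1 3 by (intro mult_nonneg_nonneg) auto
        then show ?thesis using 1 by (simp add: pdelta_def algebra_simps)
      next
        case 2
        have "(s + \<delta>) * (2 * t - s + \<delta>) \<le> 0" using 2 3 by (intro mult_nonneg_nonpos) auto
        then show ?thesis using 2 assms by (simp add: pdelta_def)
      next
        case 3
        have "(s + \<delta>) * (2 * t - s + \<delta>) \<le> (t + \<delta>)\<^sup>2"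
          using zero_le_power2[of "t - s"] by (simp add: power2_eq_square algebra_simps)
        then show ?thesis using 3 assms by (simp add: pdelta_def)
      qed
    qed
    then show ?thesis using assms by (simp add: tangent divide_simps mult.commute)
  qed
qed

lemma hdelta_nonneg: "0 < \<delta> \<Longrightarrow> 0 \<le> hdelta \<delta> x a b"
  by (simp add: hdelta_eq_pdelta pdelta_nonneg)

lemma pos_part_le_norm_mult_hdelta:
  "0 < \<delta> \<Longrightarrow> a \<noteq> 0 \<Longrightarrow> max 0 (inner a x - b) \<le> norm a * hdelta \<delta> x a b"
  using pos_part_le_pdelta[of \<delta> "inner a x - b"] by (simp add: hdelta_eq_pdelta)

lemma hdelta_le_of_feasible:
  "0 < \<delta> \<Longrightarrow> inner a x - b \<le> 0 \<Longrightarrow> hdelta \<delta> x a b \<le> \<delta> / (4 * norm a)"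
  using pdelta_le_of_nonpos[of \<delta> "inner a x - b"]
  by (simp add: hdelta_eq_pdelta divide_right_mono flip: divide_divide_eq_left)

lemma hdelta_le_norm_add:
  assumes "0 < \<delta>" "\<delta> \<le> 1" "a \<noteq> 0"
  shows "hdelta \<delta> x a b \<le> norm x + (\<bar>b\<bar> + 1) / norm a"
proof -
  have "\<bar>inner a x - b\<bar> + \<delta> \<le> norm a * norm x + (\<bar>b\<bar> + 1)"
    using Cauchy_Schwarz_ineq2[of a x] assms by linarith
  then have "hdelta \<delta> x a b \<le> (norm a * norm x + (\<bar>b\<bar> + 1)) / norm a"
    using pdelta_le_abs_add[OF assms(1), of "inner a x - b"]
    by (simp add: hdelta_eq_pdelta divide_right_mono)
  also have "\<dots> = norm x + (\<bar>b\<bar> + 1) / norm a" using assms(3) by (simp add: add_divide_distrib)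
  finally show ?thesis .
qed

lemma hdelta_subgradient_ineq:
  assumes "0 < \<delta>"
  shows "hdelta \<delta> x a b + inner (hdelta_grad \<delta> x a b) (y - x) \<le> hdelta \<delta> y a b"
proof -
  have "inner (hdelta_grad \<delta> x a b) (y - x)
      = pdelta' \<delta> (inner a x - b) * ((inner a y - b) - (inner a x - b)) / norm a"
    by (simp add: hdelta_grad_def inner_diff_right diff_divide_distrib right_diff_distrib)
  then show ?thesis
    using pdelta_subgradient_ineq[OF assms, of "inner a x - b" "inner a y - b"]
    by (simp add: hdelta_eq_pdelta divide_right_mono flip: add_divide_distrib)
qed

lemma norm_hdelta_grad_le_1: "0 < \<delta> \<Longrightarrow> norm (hdelta_grad \<delta> x a b) \<le> 1"
  by (cases "a = 0") (auto simp: hdelta_grad_def pdelta'_def divide_le_eq_1)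

lemma hdelta_grad_measurable: "(\<lambda>x. hdelta_grad \<delta> x a b) \<in> borel_measurable borel"
  unfolding hdelta_grad_def pdelta'_def by measurable

section \<open>Averages over index sequences\<close>

text \<open>\<open>seq_avg m T\<close> is the expectation with respect to independent uniform indices \<open>c 1, \<dots>, c T < m\<close>.\<close>
definition index_seqs :: "nat \<Rightarrow> nat \<Rightarrow> (nat \<Rightarrow> nat) set" where
  "index_seqs m T = PiE {1..T} (\<lambda>_. {..<m})"

definition seq_avg :: "nat \<Rightarrow> nat \<Rightarrow> ((nat \<Rightarrow> nat) \<Rightarrow> real) \<Rightarrow> real" where
  "seq_avg m T \<Phi> = (\<Sum>c\<in>index_seqs m T. \<Phi> c) / real m ^ T"

lemma finite_index_seqs: "finite (index_seqs m T)"
  unfolding index_seqs_def by (intro finite_PiE) auto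

lemma card_index_seqs: "card (index_seqs m T) = m ^ T"
  unfolding index_seqs_def by (simp add: card_PiE)

lemma index_seqs_less: "c \<in> index_seqs m T \<Longrightarrow> k \<in> {1..T} \<Longrightarrow> c k < m"
  unfolding index_seqs_def by auto

lemma seq_avg_const: "1 \<le> m \<Longrightarrow> seq_avg m T (\<lambda>_. r) = r"
  by (simp add: seq_avg_def card_index_seqs)

lemma seq_avg_add: "seq_avg m T (\<lambda>c. \<Phi> c + \<Psi> c) = seq_avg m T \<Phi> + seq_avg m T \<Psi>"
  by (simp add: seq_avg_def sum.distrib add_divide_distrib)

lemma seq_avg_diff: "seq_avg m T (\<lambda>c. \<Phi> c - \<Psi> c) = seq_avg m T \<Phi> - seq_avg m T \<Psi>"
  by (simp add: seq_avg_def sum_subtractf diff_divide_distrib)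

lemma seq_avg_mult_left: "seq_avg m T (\<lambda>c. r * \<Phi> c) = r * seq_avg m T \<Phi>"
  by (simp add: seq_avg_def sum_distrib_left)

lemma seq_avg_divide: "seq_avg m T (\<lambda>c. \<Phi> c / r) = seq_avg m T \<Phi> / r"
  by (simp add: seq_avg_def mult.commute flip: sum_divide_distrib)

lemma seq_avg_sum: "seq_avg m T (\<lambda>c. \<Sum>k\<in>K. \<Phi> k c) = (\<Sum>k\<in>K. seq_avg m T (\<Phi> k))"
  unfolding seq_avg_def by (simp add: sum.swap[of _ K] sum_divide_distrib)

lemma seq_avg_mono:
  "(\<And>c. c \<in> index_seqs m T \<Longrightarrow> \<Phi> c \<le> \<Psi> c) \<Longrightarrow> seq_avg m T \<Phi> \<le> seq_avg m T \<Psi>"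
  unfolding seq_avg_def by (intro divide_right_mono sum_mono) auto

lemma seq_avg_nonneg: "(\<And>c. c \<in> index_seqs m T \<Longrightarrow> 0 \<le> \<Phi> c) \<Longrightarrow> 0 \<le> seq_avg m T \<Phi>"
  unfolding seq_avg_def by (intro divide_nonneg_nonneg sum_nonneg) auto

lemma sum_PiE_insert:
  assumes "finite S" "k \<notin> S"
  shows "(\<Sum>c\<in>PiE (insert k S) B. \<Phi> c) = (\<Sum>j\<in>B k. \<Sum>c\<in>PiE S B. \<Phi> (c(k := j)))"
proof -
  have "(\<Sum>c\<in>PiE (insert k S) B. \<Phi> c) = (\<Sum>p\<in>B k \<times> PiE S B. \<Phi> ((\<lambda>(j, c). c(k := j)) p))"
    unfolding PiE_insert_eq by (subst sum.reindex) (use inj_combinator[OF assms(2)] in auto)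
  then show ?thesis by (simp add: sum.cartesian_product prod.case_distrib)
qed

lemma seq_avg_at_index:
  assumes m: "1 \<le> m" and k: "k \<in> {1..T}"
    and indep: "\<And>c j j'. \<phi> (c(k := j')) j = \<phi> c j"
  shows "seq_avg m T (\<lambda>c. \<phi> c (c k)) = seq_avg m T (\<lambda>c. (\<Sum>j<m. \<phi> c j) / real m)"
proof -
  define S where "S = {1..T} - {k}"
  have ins: "index_seqs m T = PiE (insert k S) (\<lambda>_. {..<m})"
    using k by (auto simp: S_def index_seqs_def insert_absorb)
  have S: "finite S" "k \<notin> S" by (auto simp: S_def)
  have "(\<Sum>c\<in>index_seqs m T. (\<Sum>j<m. \<phi> c j) / real m)
      = (\<Sum>j'<m. \<Sum>c\<in>PiE S (\<lambda>_. {..<m}). (\<Sum>j<m. \<phi> c j) / real m)"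
    unfolding ins by (simp add: sum_PiE_insert[OF S] indep)
  also have "\<dots> = (\<Sum>c\<in>PiE S (\<lambda>_. {..<m}). \<Sum>j<m. \<phi> c j)"
    using m by (simp add: sum_divide_distrib[symmetric])
  also have "\<dots> = (\<Sum>c\<in>index_seqs m T. \<phi> c (c k))"
    unfolding ins by (simp add: sum_PiE_insert[OF S] indep sum.swap[of _ "{..<m}"])
  finally show ?thesis by (simp add: seq_avg_def)
qed

lemma integral_mult_indicator_indep:
  fixes X :: "'w \<Rightarrow> 'a::euclidean_space" and \<phi> :: "'a \<Rightarrow> real"
  assumes "prob_space M" and X: "X \<in> borel_measurable M" and E: "E \<in> sets M"
    and indep: "\<And>A. A \<in> sets borel \<Longrightarrow>
      measure M ({\<omega>\<in>space M. X \<omega> \<in> A} \<inter> E) = measure M {\<omega>\<in>space M. X \<omega> \<in> A} * measure M E"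
    and \<phi>: "\<phi> \<in> borel_measurable borel"
  shows "(\<integral>\<omega>. \<phi> (X \<omega>) * indicator E \<omega> \<partial>M) = measure M E * (\<integral>\<omega>. \<phi> (X \<omega>) \<partial>M)"
proof -
  interpret prob_space M by fact
  define p where "p = measure M E"
  define D where "D = density M (\<lambda>\<omega>. ennreal (indicator E \<omega>))"
  \<comment> \<open>independence says that the law of \<open>X\<close> restricted to \<open>E\<close> is \<open>p\<close> times the law of \<open>X\<close>\<close>
  have distr_D: "distr D borel X = density (distr M borel X) (\<lambda>_. ennreal p)"
  proof (rule measure_eqI)
    fix A assume "A \<in> sets (distr D borel X)"
    then have A: "A \<in> sets borel" by simp
    have pre: "X -` A \<inter> space M \<in> sets M" using X A by (rule measurable_sets)
    have "emeasure (distr D borel X) A = emeasure M (E \<inter> (X -` A \<inter> space M))"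
      using X A by (simp add: D_def ennreal_indicator emeasure_distr emeasure_restricted[OF E pre])
    also have "\<dots> = ennreal (measure M {\<omega>\<in>space M. X \<omega> \<in> A} * p)"
      using indep[OF A] by (simp add: emeasure_eq_measure p_def Int_commute vimage_def Int_def conj_commute)
    also have "\<dots> = emeasure (density (distr M borel X) (\<lambda>_. ennreal p)) A"
      using X A by (simp add: emeasure_density_const emeasure_distr emeasure_eq_measure p_def
          ennreal_mult'' mult.commute vimage_def Int_def conj_commute)
    finally show "emeasure (distr D borel X) A = emeasure (density (distr M borel X) (\<lambda>_. ennreal p)) A" .
  qed simp
  have "(\<integral>\<omega>. \<phi> (X \<omega>) * indicator E \<omega> \<partial>M) = (\<integral>\<omega>. indicator E \<omega> *\<^sub>R \<phi> (X \<omega>) \<partial>M)"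
    by (simp add: mult.commute)
  also have "\<dots> = integral\<^sup>L D (\<lambda>\<omega>. \<phi> (X \<omega>))"
    unfolding D_def by (rule integral_density[symmetric]) (use X \<phi> E in auto)
  also have "\<dots> = integral\<^sup>L (distr D borel X) \<phi>"
    by (rule integral_distr[symmetric]) (use X \<phi> in \<open>simp_all add: D_def\<close>)
  also have "\<dots> = integral\<^sup>L (density (distr M borel X) (\<lambda>_. ennreal p)) \<phi>"
    by (simp only: distr_D)
  also have "\<dots> = p * (\<integral>\<omega>. \<phi> (X \<omega>) \<partial>M)"
    using X \<phi> by (simp add: integral_density p_def integral_distr)
  finally show ?thesis by (simp add: p_def)
qed

locale uniform_indices_indep = prob_space M for M :: "'w measure" +
  fixes X :: "'w \<Rightarrow> 'a::euclidean_space" and I :: "nat \<Rightarrow> 'w \<Rightarrow> nat" and m :: nat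
  assumes m_pos: "1 \<le> m"
    and X_measurable: "X \<in> borel_measurable M"
    and I_measurable: "\<And>k. I k \<in> measurable M (count_space UNIV)"
    and I_uniform: "\<And>k j. j < m \<Longrightarrow> prob {\<omega> \<in> space M. I k \<omega> = j} = 1 / real m"
    and X_I_indep: "\<And>A n c. A \<in> sets borel \<Longrightarrow>
      prob {\<omega> \<in> space M. X \<omega> \<in> A \<and> (\<forall>l\<in>{1..n}. I l \<omega> = c l)}
      = prob {\<omega> \<in> space M. X \<omega> \<in> A} * (\<Prod>l\<in>{1..n}. prob {\<omega> \<in> space M. I l \<omega> = c l})"
begin

definition index_event :: "nat \<Rightarrow> (nat \<Rightarrow> nat) \<Rightarrow> 'w set" where
  "index_event T c = {\<omega> \<in> space M. \<forall>l\<in>{1..T}. I l \<omega> = c l}"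

lemma I_eq_event: "{\<omega> \<in> space M. I l \<omega> = j} \<in> events"
  using measurable_sets[OF I_measurable[of l], of "{j}"] by (simp add: vimage_def Int_def conj_commute)

lemma index_event_in_events: "index_event T c \<in> events"
  unfolding index_event_def by (intro sets.sets_Collect_finite_All) (auto intro: I_eq_event)

lemma prob_index_event: "c \<in> index_seqs m T \<Longrightarrow> prob (index_event T c) = (1 / real m) ^ T"
  using X_I_indep[of UNIV T c] I_uniform index_seqs_less[of c m T]
  by (simp add: index_event_def prob_space)

lemma prob_X_in_inter_index_event:
  "A \<in> sets borel \<Longrightarrow>
    prob ({\<omega> \<in> space M. X \<omega> \<in> A} \<inter> index_event T c) = prob {\<omega> \<in> space M. X \<omega> \<in> A} * prob (index_event T c)"
  using X_I_indep[of A T c] X_I_indep[of UNIV T c] by (simp add: index_event_def Int_def conj_ac prob_space)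

lemma AE_I_less: "AE \<omega> in M. I l \<omega> < m"
proof -
  have "{\<omega> \<in> space M. I l \<omega> < m} = (\<Union>j<m. {\<omega> \<in> space M. I l \<omega> = j})" by auto
  then have "prob {\<omega> \<in> space M. I l \<omega> < m} = (\<Sum>j<m. prob {\<omega> \<in> space M. I l \<omega> = j})"
    by (simp only:) (rule measure_finite_Union, auto simp: I_eq_event disjoint_family_on_def)
  also have "\<dots> = 1" using m_pos by (simp add: I_uniform)
  finally show ?thesis by (rule AE_prob_1[THEN AE_mp]) auto
qed

lemma AE_eq_sum_index_events:
  fixes \<Psi> :: "(nat \<Rightarrow> nat) \<Rightarrow> 'a \<Rightarrow> real"
  assumes \<Psi>_local: "\<And>c c' \<xi>. (\<And>l. l \<in> {1..T} \<Longrightarrow> c l = c' l) \<Longrightarrow> \<Psi> c \<xi> = \<Psi> c' \<xi>"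
  shows "AE \<omega> in M. \<Psi> (\<lambda>l. I l \<omega>) (X \<omega>)
      = (\<Sum>c\<in>index_seqs m T. \<Psi> c (X \<omega>) * indicator (index_event T c) \<omega>)"
proof -
  have "AE \<omega> in M. \<forall>l\<in>{1..T}. I l \<omega> < m" by (intro AE_finite_allI AE_I_less) auto
  then show ?thesis using AE_space
  proof eventually_elim
    case (elim \<omega>)
    define c\<^sub>\<omega> where "c\<^sub>\<omega> = restrict (\<lambda>l. I l \<omega>) {1..T}"
    have c\<^sub>\<omega>: "c\<^sub>\<omega> \<in> index_seqs m T" using elim by (auto simp: index_seqs_def c\<^sub>\<omega>_def)
    have "\<omega> \<in> index_event T c \<longleftrightarrow> c = c\<^sub>\<omega>" if "c \<in> index_seqs m T" for c
      using that elim by (auto simp: index_event_def index_seqs_def c\<^sub>\<omega>_def PiE_iff extensional_def)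
    then have "(\<Sum>c\<in>index_seqs m T. \<Psi> c (X \<omega>) * indicator (index_event T c) \<omega>) = \<Psi> c\<^sub>\<omega> (X \<omega>)"
      using c\<^sub>\<omega> by (simp add: indicator_def finite_index_seqs sum.delta' cong: sum.cong)
    also have "\<dots> = \<Psi> (\<lambda>l. I l \<omega>) (X \<omega>)" by (rule \<Psi>_local) (simp add: c\<^sub>\<omega>_def)
    finally show ?case by simp
  qed
qed

lemma expectation_eq_seq_avg:
  fixes \<Psi> :: "(nat \<Rightarrow> nat) \<Rightarrow> 'a \<Rightarrow> real"
  assumes \<Psi>_measurable: "\<And>c. \<Psi> c \<in> borel_measurable borel"
    and \<Psi>_integrable: "\<And>c. integrable M (\<lambda>\<omega>. \<Psi> c (X \<omega>))"
    and \<Psi>_local: "\<And>c c' \<xi>. (\<And>l. l \<in> {1..T} \<Longrightarrow> c l = c' l) \<Longrightarrow> \<Psi> c \<xi> = \<Psi> c' \<xi>"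
    and \<Psi>_I_measurable: "(\<lambda>\<omega>. \<Psi> (\<lambda>l. I l \<omega>) (X \<omega>)) \<in> borel_measurable M"
  shows "expectation (\<lambda>\<omega>. \<Psi> (\<lambda>l. I l \<omega>) (X \<omega>)) = expectation (\<lambda>\<omega>. seq_avg m T (\<lambda>c. \<Psi> c (X \<omega>)))"
proof -
  have \<Psi>_X_measurable: "(\<lambda>\<omega>. \<Psi> c (X \<omega>)) \<in> borel_measurable M" for c
    using measurable_compose[OF X_measurable \<Psi>_measurable] by simp
  have "expectation (\<lambda>\<omega>. \<Psi> (\<lambda>l. I l \<omega>) (X \<omega>))
      = expectation (\<lambda>\<omega>. \<Sum>c\<in>index_seqs m T. \<Psi> c (X \<omega>) * indicator (index_event T c) \<omega>)"
    by (intro integral_cong_AE[OF \<Psi>_I_measurable _ AE_eq_sum_index_events[OF \<Psi>_local]]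
        borel_measurable_sum borel_measurable_times
        \<Psi>_X_measurable borel_measurable_indicator index_event_in_events)
  also have "\<dots> = (\<Sum>c\<in>index_seqs m T. expectation (\<lambda>\<omega>. \<Psi> c (X \<omega>) * indicator (index_event T c) \<omega>))"
    by (intro Bochner_Integration.integral_sum integrable_real_mult_indicator index_event_in_events
        \<Psi>_integrable)
  also have "\<dots> = (\<Sum>c\<in>index_seqs m T. prob (index_event T c) * expectation (\<lambda>\<omega>. \<Psi> c (X \<omega>)))"
    by (intro sum.cong refl integral_mult_indicator_indep[OF prob_space_axioms X_measurable
          index_event_in_events prob_X_in_inter_index_event \<Psi>_measurable])
  also have "\<dots> = (\<Sum>c\<in>index_seqs m T. expectation (\<lambda>\<omega>. \<Psi> c (X \<omega>))) / real m ^ T"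
    by (simp add: prob_index_event sum_divide_distrib power_one_over cong: sum.cong)
  also have "\<dots> = expectation (\<lambda>\<omega>. seq_avg m T (\<lambda>c. \<Psi> c (X \<omega>)))"
    using \<Psi>_integrable by (simp add: seq_avg_def Bochner_Integration.integral_sum)
  finally show ?thesis .
qed

end

locale random_incremental_penalty =
  fixes f :: "'a::euclidean_space \<Rightarrow> real" and sg :: "'a \<Rightarrow> 'a"
    and m :: nat and a :: "nat \<Rightarrow> 'a" and b :: "nat \<Rightarrow> real"
    and \<mu> M1 M2 d g :: real and s \<gamma> \<delta> :: "nat \<Rightarrow> real"
  assumes m_pos: "1 \<le> m"
    and a_nonzero: "\<And>j. j < m \<Longrightarrow> a j \<noteq> 0"
    and feasible_nonempty: "\<exists>y. \<forall>j<m. inner (a j) y - b j \<le> 0"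
    and mu_pos: "0 < \<mu>"
    and strongly_convex: "strongly_convex_const f \<mu>"
    and M1_pos: "0 < M1" and M2_pos: "0 < M2"
    and subgradient_growth: "\<And>y v. v \<in> subdifferential f y \<Longrightarrow> norm v \<le> M1 * norm y + M2"
    and sg_subgradient: "\<And>y. sg y \<in> subdifferential f y"
    and s_def: "\<And>k. s k = 2 / (\<mu> * real k)"
    and d_gt_1: "1 < d" and \<delta>_def: "\<And>k. \<delta> k = 1 / real k powr d"
    and g_pos: "0 < g" and \<gamma>_def: "\<And>k. \<gamma> k = ln (real k) powr g"
begin

lemma strong_subgradient_ineq: "f v + inner (sg v) (u - v) + \<mu> / 2 * (norm (u - v))\<^sup>2 \<le> f u"
  using strongly_convex_constD[OF strongly_convex sg_subgradient] .

lemma subgradient_ineq: "f v + inner (sg v) (u - v) \<le> f u"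
proof -
  have "0 \<le> \<mu> / 2 * (norm (u - v))\<^sup>2" using mu_pos by simp
  then show ?thesis using strong_subgradient_ineq[of v u] by linarith
qed

lemma norm_sg_le: "norm (sg y) \<le> M1 * norm y + M2"
  using subgradient_growth sg_subgradient by blast

lemma f_convex: "convex_on UNIV f"
  using subgradient_convex_on[OF sg_subgradient] .

lemma f_continuous: "continuous_on UNIV f"
  using convex_on_continuous[OF open_UNIV f_convex] .

lemma f_measurable: "f \<in> borel_measurable borel"
  using borel_measurable_continuous_onI[OF f_continuous] .

lemma abs_f_le_quadratic: "\<exists>C\<ge>0. \<forall>y. \<bar>f y\<bar> \<le> C * (1 + (norm y)\<^sup>2)"
proof -
  define C where "C = \<bar>f 0\<bar> + M1 + M2 + norm (sg 0)"
  have "\<bar>f y\<bar> \<le> C * (1 + (norm y)\<^sup>2)" for y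
  proof -
    define N where "N = 1 + (norm y)\<^sup>2"
    have N: "1 \<le> N" "norm y \<le> N" "(norm y)\<^sup>2 \<le> N"
      using le_one_plus_square[of "norm y"] by (simp_all add: N_def)
    have "f y \<le> f 0 + inner (sg y) y" using subgradient_ineq[of y 0] by simp
    also have "inner (sg y) y \<le> M1 * (norm y)\<^sup>2 + M2 * norm y"
      using norm_cauchy_schwarz[of "sg y" y] mult_right_mono[OF norm_sg_le[of y] norm_ge_zero[of y]]
      by (simp add: power2_eq_square algebra_simps)
    also have "\<dots> \<le> M1 * N + M2 * N" using N M1_pos M2_pos by (intro add_mono mult_left_mono) auto
    finally have upper: "f y \<le> f 0 + M1 * N + M2 * N" by simp
    have "f 0 - norm (sg 0) * norm y \<le> f y"
      using subgradient_ineq[of 0 y] norm_cauchy_schwarz[of "sg 0" "- y"] by simp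
    moreover have "norm (sg 0) * norm y \<le> norm (sg 0) * N" using N by (intro mult_left_mono) auto
    ultimately have lower: "f 0 - norm (sg 0) * N \<le> f y" by simp
    have "\<bar>f 0\<bar> \<le> \<bar>f 0\<bar> * N" using mult_left_mono[of 1 N "\<bar>f 0\<bar>"] N by simp
    moreover have "0 \<le> M1 * N" "0 \<le> M2 * N" "0 \<le> norm (sg 0) * N" using N M1_pos M2_pos by simp_all
    moreover have "C * N = \<bar>f 0\<bar> * N + M1 * N + M2 * N + norm (sg 0) * N"
      by (simp add: C_def algebra_simps)
    ultimately show ?thesis unfolding N_def[symmetric] abs_le_iff using upper lower by auto
  qed
  moreover have "0 \<le> C" using M1_pos M2_pos by (simp add: C_def)
  ultimately show ?thesis by blast
qed

definition feasible :: "'a \<Rightarrow> bool" where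
  "feasible y \<longleftrightarrow> (\<forall>j<m. inner (a j) y \<le> b j)"

lemma exists_minimizer: "\<exists>z. feasible z \<and> (\<forall>y. feasible y \<longrightarrow> f z \<le> f y)"
proof -
  have "{y. feasible y} = (\<Inter>j<m. {y. inner (a j) y \<le> b j})" by (auto simp: feasible_def)
  then have "closed {y. feasible y}" by (auto intro: closed_halfspace_le)
  moreover obtain y0 where "y0 \<in> {y. feasible y}" using feasible_nonempty by (auto simp: feasible_def)
  ultimately have "\<exists>z\<in>{y. feasible y}. \<forall>y\<in>{y. feasible y}. f z \<le> f y"
    by (rule strongly_convex_attains_min[OF strongly_convex mu_pos sg_subgradient f_continuous])
  then show ?thesis by auto
qed

definition xopt :: 'a where
  "xopt = (SOME z. feasible z \<and> (\<forall>y. feasible y \<longrightarrow> f z \<le> f y))"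

lemma xopt_feasible: "feasible xopt" and xopt_min: "feasible y \<Longrightarrow> f xopt \<le> f y"
  using someI_ex[OF exists_minimizer] unfolding xopt_def[symmetric] by auto

lemma Inf_feasible_eq: "Inf {f y | y. \<forall>j<m. inner (a j) y - b j \<le> 0} = f xopt"
  by (rule cInf_eq_minimum) (use xopt_feasible xopt_min in \<open>auto simp: feasible_def\<close>)

lemma s_pos: "1 \<le> k \<Longrightarrow> 0 < s k"
  using mu_pos by (simp add: s_def)

lemma inverse_s: "1 / s k = \<mu> * real k / 2"
  by (simp add: s_def)

lemma \<delta>_pos: "1 \<le> k \<Longrightarrow> 0 < \<delta> k"
  by (simp add: \<delta>_def)

lemma \<delta>_le_inverse: "1 \<le> k \<Longrightarrow> \<delta> k \<le> 1 / real k"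
proof -
  assume k: "1 \<le> k"
  have "real k powr 1 \<le> real k powr d" using d_gt_1 k by (intro powr_mono) auto
  then show ?thesis using k by (simp add: \<delta>_def divide_left_mono)
qed

lemma \<delta>_le_1: "1 \<le> k \<Longrightarrow> \<delta> k \<le> 1"
  using \<delta>_le_inverse[of k] by (simp add: order_trans)

lemma \<gamma>_nonneg: "0 \<le> \<gamma> k"
  by (simp add: \<gamma>_def)

lemma \<gamma>_mono: "1 \<le> k \<Longrightarrow> k \<le> T \<Longrightarrow> \<gamma> k \<le> \<gamma> T"
  unfolding \<gamma>_def using g_pos by (intro powr_mono2) auto

lemma \<gamma>_square: "(\<gamma> k)\<^sup>2 = ln (real k) powr (2 * g)"
  by (simp add: \<gamma>_def power2_eq_square flip: powr_add)

lemma \<gamma>_square_le_linear: "1 \<le> k \<Longrightarrow> (\<gamma> k)\<^sup>2 \<le> (2 * g) powr (2 * g) * real k"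
proof (cases "k = 1")
  case False
  assume "1 \<le> k"
  with False have "1 < real k" by simp
  then show ?thesis unfolding \<gamma>_square using g_pos by (intro ln_powr_bound2) auto
qed (simp add: \<gamma>_def)

lemma \<gamma>_mult_\<delta>_le: "1 \<le> k \<Longrightarrow> \<gamma> k * \<delta> k \<le> 1 + (2 * g) powr (2 * g)"
proof -
  assume k: "1 \<le> k"
  have "\<gamma> k \<le> 1 + (2 * g) powr (2 * g) * real k"
    using le_one_plus_square[of "\<gamma> k"] \<gamma>_square_le_linear[OF k] by linarith
  then have "\<gamma> k * \<delta> k \<le> (1 + (2 * g) powr (2 * g) * real k) * (1 / real k)"
    using \<delta>_le_inverse[OF k] \<delta>_pos[OF k] \<gamma>_nonneg by (intro mult_mono) auto
  also have "\<dots> \<le> 1 + (2 * g) powr (2 * g)" using k by (simp add: field_simps)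
  finally show ?thesis .
qed

lemma \<gamma>_unbounded: "\<exists>k\<^sub>0. \<forall>k\<ge>k\<^sub>0. C \<le> \<gamma> k"
proof -
  define k\<^sub>0 where "k\<^sub>0 = nat \<lceil>exp (max 1 C powr (1 / g))\<rceil> + 1"
  have "C \<le> \<gamma> k" if "k\<^sub>0 \<le> k" for k
  proof -
    have "exp (max 1 C powr (1 / g)) \<le> real k" using that unfolding k\<^sub>0_def by linarith
    then have "max 1 C powr (1 / g) \<le> ln (real k)" using that by (simp add: k\<^sub>0_def ln_ge_iff)
    then have "(max 1 C powr (1 / g)) powr g \<le> \<gamma> k"
      unfolding \<gamma>_def using g_pos by (intro powr_mono2) auto
    then show ?thesis using g_pos by (simp add: powr_powr)
  qed
  then show ?thesis by (intro exI[of _ k\<^sub>0]) (auto simp: k\<^sub>0_def)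
qed

lemma one_plus_\<gamma>_square_le: "3 \<le> t \<Longrightarrow> 1 + (\<gamma> t)\<^sup>2 \<le> 2 * ln (real t) powr (2 * g)"
proof -
  assume t: "3 \<le> t"
  have "exp 1 \<le> real t" using exp_le t by linarith
  then have "1 \<le> ln (real t)" using t by (simp add: ln_ge_iff)
  then have "1 \<le> \<gamma> t" unfolding \<gamma>_def using g_pos by (intro ge_one_powr_ge_zero) auto
  then have "1 \<le> (\<gamma> t)\<^sup>2" by (simp add: one_le_power)
  then show ?thesis by (simp add: \<gamma>_square)
qed

definition avg_hdelta :: "nat \<Rightarrow> 'a \<Rightarrow> real" where
  "avg_hdelta k x = (\<Sum>j<m. hdelta (\<delta> k) x (a j) (b j)) / real m"

lemma avg_hdelta_nonneg: "1 \<le> k \<Longrightarrow> 0 \<le> avg_hdelta k x"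
  unfolding avg_hdelta_def using \<delta>_pos by (intro divide_nonneg_nonneg sum_nonneg hdelta_nonneg) auto

lemma avg_hdelta_xopt_le: "\<exists>A\<ge>0. \<forall>k\<ge>1. avg_hdelta k xopt \<le> A * \<delta> k"
proof (intro exI conjI allI impI)
  fix k :: nat assume k: "1 \<le> k"
  have "(\<Sum>j<m. hdelta (\<delta> k) xopt (a j) (b j)) \<le> (\<Sum>j<m. \<delta> k / (4 * norm (a j)))"
    using xopt_feasible \<delta>_pos[OF k] by (intro sum_mono hdelta_le_of_feasible) (auto simp: feasible_def)
  then show "avg_hdelta k xopt \<le> (\<Sum>j<m. 1 / (4 * norm (a j))) / real m * \<delta> k"
    by (simp add: avg_hdelta_def divide_right_mono sum_distrib_right)
qed (simp add: sum_nonneg)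

lemma violation_le_avg_hdelta:
  "1 \<le> k \<Longrightarrow> violation m a b x \<le> (real m * (\<Sum>j<m. norm (a j))) * avg_hdelta k x"
proof -
  assume k: "1 \<le> k"
  define A where "A = (\<Sum>j<m. norm (a j))"
  have "violation m a b x \<le> (\<Sum>j<m. norm (a j) * hdelta (\<delta> k) x (a j) (b j))"
    unfolding violation_def using \<delta>_pos[OF k] a_nonzero
    by (intro sum_mono pos_part_le_norm_mult_hdelta) auto
  also have "\<dots> \<le> (\<Sum>j<m. A * hdelta (\<delta> k) x (a j) (b j))"
    unfolding A_def using \<delta>_pos[OF k] by (intro sum_mono mult_right_mono member_le_sum hdelta_nonneg) auto
  also have "\<dots> = (real m * A) * avg_hdelta k x"
    using m_pos by (simp add: avg_hdelta_def sum_distrib_left[symmetric])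
  finally show ?thesis by (simp add: A_def)
qed

lemma avg_hdelta_le: "\<exists>B\<ge>0. \<forall>k\<ge>1. \<forall>x. avg_hdelta k x \<le> norm x + B"
proof (intro exI conjI allI impI)
  fix k :: nat and x assume k: "1 \<le> k"
  have "(\<Sum>j<m. hdelta (\<delta> k) x (a j) (b j)) \<le> (\<Sum>j<m. norm x + (\<bar>b j\<bar> + 1) / norm (a j))"
    using \<delta>_pos[OF k] \<delta>_le_1[OF k] a_nonzero by (intro sum_mono hdelta_le_norm_add) auto
  then have "avg_hdelta k x \<le> (real m * norm x + (\<Sum>j<m. (\<bar>b j\<bar> + 1) / norm (a j))) / real m"
    unfolding avg_hdelta_def by (simp add: sum.distrib divide_right_mono)
  then show "avg_hdelta k x \<le> norm x + (\<Sum>j<m. (\<bar>b j\<bar> + 1) / norm (a j)) / real m"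
    using m_pos by (simp add: add_divide_distrib)
qed (simp add: sum_nonneg)

lemma exact_penalty_xopt: "\<exists>\<Lambda>\<ge>0. \<forall>x. f xopt \<le> f x + \<Lambda> * violation m a b x"
  using exact_penalty[OF f_convex] xopt_feasible xopt_min by (simp add: feasible_def)

lemma exact_avg_hdelta_penalty: "\<exists>\<Lambda>\<ge>0. \<forall>k\<ge>1. \<forall>x. f xopt \<le> f x + \<Lambda> * avg_hdelta k x"
proof -
  obtain \<Lambda> where \<Lambda>: "0 \<le> \<Lambda>" "\<And>x. f xopt \<le> f x + \<Lambda> * violation m a b x"
    using exact_penalty_xopt by blast
  have "f xopt \<le> f x + (\<Lambda> * (real m * (\<Sum>j<m. norm (a j)))) * avg_hdelta k x" if "1 \<le> k" for k x
    using \<Lambda>(2)[of x] mult_left_mono[OF violation_le_avg_hdelta[OF that, of x] \<Lambda>(1)]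
    by (simp add: mult.assoc)
  then show ?thesis
    using \<Lambda>(1) by (intro exI[of _ "\<Lambda> * (real m * (\<Sum>j<m. norm (a j)))"]) (auto intro!: mult_nonneg_nonneg sum_nonneg)
qed

definition step :: "nat \<Rightarrow> 'a \<Rightarrow> nat \<Rightarrow> 'a" where
  "step k x j = x - s k *\<^sub>R (sg x + \<gamma> k *\<^sub>R hdelta_grad (\<delta> k) x (a j) (b j))"

text \<open>The iterates are indexed from 1, as in the paper: \<open>iterates \<xi> c 1 = \<xi>\<close> and step \<open>k\<close> uses
  the constraint \<open>c k\<close>; the value at index 0 is irrelevant.\<close>
primrec iterates :: "'a \<Rightarrow> (nat \<Rightarrow> nat) \<Rightarrow> nat \<Rightarrow> 'a" where
  "iterates \<xi> c 0 = \<xi>"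
| "iterates \<xi> c (Suc k) = (if k = 0 then \<xi> else step k (iterates \<xi> c k) (c k))"

lemma iterates_Suc: "1 \<le> k \<Longrightarrow> iterates \<xi> c (Suc k) = step k (iterates \<xi> c k) (c k)"
  by simp

lemma iterates_cong: "(\<And>l. 1 \<le> l \<Longrightarrow> l < k \<Longrightarrow> c l = c' l) \<Longrightarrow> iterates \<xi> c k = iterates \<xi> c' k"
  by (induction k) auto

lemma iterates_fun_upd: "k \<le> l \<Longrightarrow> iterates \<xi> (c(l := j)) k = iterates \<xi> c k"
  by (rule iterates_cong) auto

lemma norm_step_direction_le:
  assumes "1 \<le> k"
  shows "norm (sg x + \<gamma> k *\<^sub>R hdelta_grad (\<delta> k) x (a j) (b j)) \<le> M1 * norm x + M2 + \<gamma> k"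
  using norm_triangle_ineq[of "sg x" "\<gamma> k *\<^sub>R hdelta_grad (\<delta> k) x (a j) (b j)"] norm_sg_le[of x]
    mult_left_mono[OF norm_hdelta_grad_le_1[OF \<delta>_pos[OF assms], of x "a j" "b j"] \<gamma>_nonneg[of k]]
  by (simp add: \<gamma>_nonneg)

lemma norm_iterates_le_linear: "\<exists>\<alpha> \<beta>. \<forall>\<xi> c. norm (iterates \<xi> c k) \<le> \<alpha> * norm \<xi> + \<beta>"
proof (induction k)
  case (Suc k)
  then obtain \<alpha> \<beta> where IH: "\<And>\<xi> c. norm (iterates \<xi> c k) \<le> \<alpha> * norm \<xi> + \<beta>" by blast
  show ?case
  proof (cases "k = 0")
    case False
    define q where "q = 1 + s k * M1"
    have q: "0 \<le> q" using s_pos[of k] False M1_pos by (simp add: q_def)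
    have "norm (iterates \<xi> c (Suc k)) \<le> (q * \<alpha>) * norm \<xi> + (q * \<beta> + s k * (M2 + \<gamma> k))" for \<xi> c
    proof -
      have "norm (iterates \<xi> c (Suc k))
          \<le> norm (iterates \<xi> c k) + s k * (M1 * norm (iterates \<xi> c k) + M2 + \<gamma> k)"
        using False norm_triangle_ineq4 s_pos[of k]
          mult_left_mono[OF norm_step_direction_le, of k "s k" "iterates \<xi> c k"]
        by (fastforce simp: step_def intro: order_trans)
      also have "\<dots> = q * norm (iterates \<xi> c k) + s k * (M2 + \<gamma> k)" by (simp add: q_def algebra_simps)
      also have "\<dots> \<le> q * (\<alpha> * norm \<xi> + \<beta>) + s k * (M2 + \<gamma> k)"
        using q IH by (intro add_right_mono mult_left_mono) auto
      finally show ?thesis by (simp add: algebra_simps)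
    qed
    then show ?thesis by blast
  qed (rule exI[of _ 1], rule exI[of _ 0], simp)
qed (rule exI[of _ 1], rule exI[of _ 0], simp)

lemma step_measurable: "sg \<in> borel_measurable borel \<Longrightarrow> (\<lambda>x. step k x j) \<in> borel_measurable borel"
  unfolding step_def
  by (intro borel_measurable_diff borel_measurable_scaleR borel_measurable_add borel_measurable_const
      hdelta_grad_measurable measurable_ident_sets refl)

lemma iterates_measurable:
  assumes "sg \<in> borel_measurable borel"
  shows "(\<lambda>\<xi>. iterates \<xi> c k) \<in> borel_measurable borel"
proof (induction k)
  case (Suc k)
  from measurable_compose[OF Suc.IH step_measurable[OF assms]] show ?case by (cases "k = 0") simp_all
qed simp

lemma dist_step_le:
  assumes k: "1 \<le> k" and j: "j < m"
  shows "(norm (step k x j - xopt))\<^sup>2 \<le> (norm (x - xopt))\<^sup>2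
      - 2 * s k * (f x - f xopt + \<mu> / 2 * (norm (x - xopt))\<^sup>2)
      - 2 * s k * \<gamma> k * (hdelta (\<delta> k) x (a j) (b j) - hdelta (\<delta> k) xopt (a j) (b j))
      + (s k)\<^sup>2 * (M1 * norm x + M2 + \<gamma> k)\<^sup>2"
proof -
  define hg where "hg = hdelta_grad (\<delta> k) x (a j) (b j)"
  define G where "G = sg x + \<gamma> k *\<^sub>R hg"
  have "(norm (step k x j - xopt))\<^sup>2 = (norm (x - xopt))\<^sup>2 - 2 * s k * inner G (x - xopt) + (s k)\<^sup>2 * (norm G)\<^sup>2"
    using norm_diff_scaleR_square[of "x - xopt" "s k" G] by (simp add: step_def G_def hg_def algebra_simps)
  moreover have "2 * s k * inner G (x - xopt)
      = 2 * s k * inner (sg x) (x - xopt) + 2 * s k * \<gamma> k * inner hg (x - xopt)"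
    by (simp add: G_def inner_add_left algebra_simps)
  moreover have "2 * s k * (f x - f xopt + \<mu> / 2 * (norm (x - xopt))\<^sup>2) \<le> 2 * s k * inner (sg x) (x - xopt)"
    using strong_subgradient_ineq[of x xopt] s_pos[OF k]
    by (intro mult_left_mono) (auto simp: norm_minus_commute inner_diff_right)
  moreover have "2 * s k * \<gamma> k * (hdelta (\<delta> k) x (a j) (b j) - hdelta (\<delta> k) xopt (a j) (b j))
      \<le> 2 * s k * \<gamma> k * inner hg (x - xopt)"
    using hdelta_subgradient_ineq[OF \<delta>_pos[OF k], of x "a j" "b j" xopt] s_pos[OF k] \<gamma>_nonneg[of k]
    by (intro mult_left_mono) (auto simp: hg_def inner_diff_right)
  moreover have "(s k)\<^sup>2 * (norm G)\<^sup>2 \<le> (s k)\<^sup>2 * (M1 * norm x + M2 + \<gamma> k)\<^sup>2"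
    using norm_step_direction_le[OF k] by (intro mult_left_mono) (auto simp: G_def hg_def power_mono)
  ultimately show ?thesis by linarith
qed

subsection \<open>Mean-square analysis for a fixed starting point\<close>

lemma f_ge_xopt_minus: "f xopt - (norm (sg xopt))\<^sup>2 / (2 * \<mu>) \<le> f x"
proof -
  define r G where "r = norm (x - xopt)" and "G = norm (sg xopt)"
  have "f xopt + inner (sg xopt) (x - xopt) + \<mu> / 2 * r\<^sup>2 \<le> f x"
    unfolding r_def by (rule strong_subgradient_ineq)
  moreover have "- (G * r) \<le> inner (sg xopt) (x - xopt)"
    using norm_cauchy_schwarz[of "sg xopt" "xopt - x"]
    by (simp add: G_def r_def inner_diff_right norm_minus_commute)
  moreover have "- (G\<^sup>2 / (2 * \<mu>)) \<le> \<mu> / 2 * r\<^sup>2 - G * r"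
    using mu_pos zero_le_power2[of "\<mu> * r - G"] by (simp add: field_simps power2_eq_square)
  ultimately show ?thesis by (simp add: G_def)
qed

lemma step_direction_bound_le:
  "(M1 * norm x + M2 + \<gamma> k)\<^sup>2
    \<le> 6 * M1\<^sup>2 * (norm (x - xopt))\<^sup>2 + (6 * M1\<^sup>2 * (norm xopt)\<^sup>2 + 3 * M2\<^sup>2) + 3 * (\<gamma> k)\<^sup>2"
proof -
  have "(norm x)\<^sup>2 \<le> (norm (x - xopt) + norm xopt)\<^sup>2"
    using norm_triangle_ineq[of "x - xopt" xopt] by (intro power_mono) auto
  also have "\<dots> \<le> 2 * ((norm (x - xopt))\<^sup>2 + (norm xopt)\<^sup>2)" by (rule square_sum_le)
  finally have "M1\<^sup>2 * (norm x)\<^sup>2 \<le> M1\<^sup>2 * (2 * ((norm (x - xopt))\<^sup>2 + (norm xopt)\<^sup>2))"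
    by (intro mult_left_mono) auto
  moreover have "(M1 * norm x + M2 + \<gamma> k)\<^sup>2 \<le> 3 * (M1\<^sup>2 * (norm x)\<^sup>2 + M2\<^sup>2 + (\<gamma> k)\<^sup>2)"
    using square_sum3_le[of "M1 * norm x" M2 "\<gamma> k"] by (simp add: power_mult_distrib)
  ultimately show ?thesis by (simp add: algebra_simps)
qed

definition mean_dist2 :: "'a \<Rightarrow> nat \<Rightarrow> nat \<Rightarrow> real" where
  "mean_dist2 \<xi> T k = seq_avg m T (\<lambda>c. (norm (iterates \<xi> c k - xopt))\<^sup>2)"

definition mean_gap :: "'a \<Rightarrow> nat \<Rightarrow> nat \<Rightarrow> real" where
  "mean_gap \<xi> T k = seq_avg m T (\<lambda>c. f (iterates \<xi> c k) - f xopt + \<gamma> k * avg_hdelta k (iterates \<xi> c k))"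

text \<open>\<open>mean_dir2\<close> averages the square of the bound on the search direction from
  \<open>norm_step_direction_le\<close>.\<close>
definition mean_dir2 :: "'a \<Rightarrow> nat \<Rightarrow> nat \<Rightarrow> real" where
  "mean_dir2 \<xi> T k = seq_avg m T (\<lambda>c. (M1 * norm (iterates \<xi> c k) + M2 + \<gamma> k)\<^sup>2)"

definition mean_penalty :: "'a \<Rightarrow> nat \<Rightarrow> nat \<Rightarrow> real" where
  "mean_penalty \<xi> T k = seq_avg m T (\<lambda>c. avg_hdelta k (iterates \<xi> c k))"

lemma mean_dist2_nonneg: "0 \<le> mean_dist2 \<xi> T k"
  unfolding mean_dist2_def by (intro seq_avg_nonneg) auto

lemma mean_dist2_1: "mean_dist2 \<xi> T 1 = (norm (\<xi> - xopt))\<^sup>2"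
  by (simp add: mean_dist2_def seq_avg_const[OF m_pos])

lemma mean_penalty_nonneg: "1 \<le> k \<Longrightarrow> 0 \<le> mean_penalty \<xi> T k"
  unfolding mean_penalty_def by (intro seq_avg_nonneg avg_hdelta_nonneg)

text \<open>Averaging the one-step inequality over the uniformly chosen constraint \<open>c k\<close>.\<close>
lemma mean_dist2_Suc_le:
  assumes k: "1 \<le> k" "k \<le> T"
  shows "mean_dist2 \<xi> T (Suc k) \<le> mean_dist2 \<xi> T k - 2 * s k * (mean_gap \<xi> T k + \<mu> / 2 * mean_dist2 \<xi> T k)
      + (s k)\<^sup>2 * mean_dir2 \<xi> T k + 2 * s k * \<gamma> k * avg_hdelta k xopt"
proof -
  define x where "x c = iterates \<xi> c k" for c
  define E where "E c = (norm (x c - xopt))\<^sup>2 - 2 * s k * (f (x c) - f xopt + \<mu> / 2 * (norm (x c - xopt))\<^sup>2)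
    + (s k)\<^sup>2 * (M1 * norm (x c) + M2 + \<gamma> k)\<^sup>2" for c
  define \<beta> where "\<beta> = 2 * s k * \<gamma> k"
  define \<phi> where "\<phi> c j = E c - \<beta> * (hdelta (\<delta> k) (x c) (a j) (b j) - hdelta (\<delta> k) xopt (a j) (b j))"
    for c j
  have "mean_dist2 \<xi> T (Suc k) \<le> seq_avg m T (\<lambda>c. \<phi> c (c k))"
    unfolding mean_dist2_def
  proof (rule seq_avg_mono)
    fix c assume "c \<in> index_seqs m T"
    then have "c k < m" using k by (auto intro: index_seqs_less)
    from dist_step_le[OF k(1) this, of "x c"] k
    show "(norm (iterates \<xi> c (Suc k) - xopt))\<^sup>2 \<le> \<phi> c (c k)"
      by (simp add: \<phi>_def \<beta>_def E_def x_def iterates_Suc algebra_simps)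
  qed
  also have "\<dots> = seq_avg m T (\<lambda>c. (\<Sum>j<m. \<phi> c j) / real m)"
    using k by (intro seq_avg_at_index m_pos) (auto simp: \<phi>_def E_def x_def iterates_fun_upd)
  also have "(\<lambda>c. (\<Sum>j<m. \<phi> c j) / real m) = (\<lambda>c. E c - \<beta> * (avg_hdelta k (x c) - avg_hdelta k xopt))"
    using m_pos by (simp add: \<phi>_def avg_hdelta_def sum_subtractf flip: sum_distrib_left)
      (simp add: right_diff_distrib diff_divide_distrib)
  also have "seq_avg m T \<dots> = mean_dist2 \<xi> T k - 2 * s k * (mean_gap \<xi> T k + \<mu> / 2 * mean_dist2 \<xi> T k)
      + (s k)\<^sup>2 * mean_dir2 \<xi> T k + 2 * s k * \<gamma> k * avg_hdelta k xopt"
    by (simp add: E_def x_def \<beta>_def mean_dist2_def mean_gap_def mean_dir2_def algebra_simps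
        seq_avg_add seq_avg_diff seq_avg_mult_left seq_avg_const[OF m_pos])
  finally show ?thesis .
qed

lemma mean_gap_ge: "1 \<le> k \<Longrightarrow> - ((norm (sg xopt))\<^sup>2 / (2 * \<mu>)) \<le> mean_gap \<xi> T k"
proof -
  assume k: "1 \<le> k"
  have "seq_avg m T (\<lambda>c. - ((norm (sg xopt))\<^sup>2 / (2 * \<mu>))) \<le> mean_gap \<xi> T k"
    unfolding mean_gap_def
    using f_ge_xopt_minus \<gamma>_nonneg[of k] avg_hdelta_nonneg[OF k]
    by (intro seq_avg_mono) (smt (verit) mult_nonneg_nonneg)
  then show ?thesis by (simp add: seq_avg_const[OF m_pos])
qed

lemma mean_gap_ge_penalty: "\<exists>L\<ge>0. \<forall>\<xi> T k. 1 \<le> k \<longrightarrow> (\<gamma> k - L) * mean_penalty \<xi> T k \<le> mean_gap \<xi> T k"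
proof -
  obtain L where "0 \<le> L" and L: "\<And>k x. 1 \<le> k \<Longrightarrow> f xopt \<le> f x + L * avg_hdelta k x"
    using exact_avg_hdelta_penalty by blast
  have "(\<gamma> k - L) * mean_penalty \<xi> T k \<le> mean_gap \<xi> T k" if "1 \<le> k" for \<xi> T k
    unfolding mean_penalty_def mean_gap_def seq_avg_mult_left[symmetric]
    using L[OF that] by (intro seq_avg_mono) (simp add: algebra_simps)
  then show ?thesis using \<open>0 \<le> L\<close> by blast
qed

lemma mean_dir2_le:
  "mean_dir2 \<xi> T k \<le> 6 * M1\<^sup>2 * mean_dist2 \<xi> T k + (6 * M1\<^sup>2 * (norm xopt)\<^sup>2 + 3 * M2\<^sup>2) + 3 * (\<gamma> k)\<^sup>2"
  unfolding mean_dir2_def mean_dist2_def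
  by (rule order_trans[OF seq_avg_mono[OF step_direction_bound_le]])
    (simp add: seq_avg_add seq_avg_mult_left seq_avg_const[OF m_pos])

lemma mean_penalty_le: "\<exists>B\<ge>0. \<forall>\<xi> T k. 1 \<le> k \<longrightarrow> mean_penalty \<xi> T k \<le> mean_dist2 \<xi> T k + B"
proof -
  obtain B where "0 \<le> B" and B: "\<And>k x. 1 \<le> k \<Longrightarrow> avg_hdelta k x \<le> norm x + B"
    using avg_hdelta_le by blast
  have "avg_hdelta k x \<le> (norm (x - xopt))\<^sup>2 + (1 + norm xopt + B)" if "1 \<le> k" for k x
    using B[OF that, of x] norm_triangle_ineq[of "x - xopt" xopt] le_one_plus_square[of "norm (x - xopt)"]
    by simp
  then have "mean_penalty \<xi> T k \<le> seq_avg m T (\<lambda>c. (norm (iterates \<xi> c k - xopt))\<^sup>2 + (1 + norm xopt + B))"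
    if "1 \<le> k" for \<xi> T k
    unfolding mean_penalty_def using that by (intro seq_avg_mono)
  then have "mean_penalty \<xi> T k \<le> mean_dist2 \<xi> T k + (1 + norm xopt + B)" if "1 \<le> k" for \<xi> T k
    using that by (simp add: seq_avg_add seq_avg_const[OF m_pos] mean_dist2_def)
  then show ?thesis using \<open>0 \<le> B\<close> by (intro exI[of _ "1 + norm xopt + B"]) auto
qed

lemma gap_error_le:
  assumes k: "1 \<le> k"
  shows "- (2 * s k * mean_gap \<xi> T k) \<le> 2 * (norm (sg xopt))\<^sup>2 / \<mu>\<^sup>2 / real k"
proof -
  have "2 * s k * (- ((norm (sg xopt))\<^sup>2 / (2 * \<mu>))) \<le> 2 * s k * mean_gap \<xi> T k"
    using mean_gap_ge[OF k] s_pos[OF k] by (intro mult_left_mono) auto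
  moreover have "2 * s k * ((norm (sg xopt))\<^sup>2 / (2 * \<mu>)) = 2 * (norm (sg xopt))\<^sup>2 / \<mu>\<^sup>2 / real k"
    by (simp add: s_def power2_eq_square)
  ultimately show ?thesis by simp
qed

lemma dir2_error_le:
  assumes k: "1 \<le> k"
  shows "(s k)\<^sup>2 * mean_dir2 \<xi> T k \<le> 24 * M1\<^sup>2 / \<mu>\<^sup>2 / (real k)\<^sup>2 * mean_dist2 \<xi> T k
    + (4 * (6 * M1\<^sup>2 * (norm xopt)\<^sup>2 + 3 * M2\<^sup>2) + 12 * (2 * g) powr (2 * g)) / \<mu>\<^sup>2 / real k"
proof -
  define r Y C where "r = real k" and "Y = 6 * M1\<^sup>2 * (norm xopt)\<^sup>2 + 3 * M2\<^sup>2"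
    and "C = (2 * g) powr (2 * g)"
  have r: "1 \<le> r" using k by (simp add: r_def)
  have "0 \<le> Y" by (simp add: Y_def)
  have s2: "(s k)\<^sup>2 = 4 / \<mu>\<^sup>2 / r\<^sup>2" by (simp add: s_def r_def power2_eq_square)
  have "(s k)\<^sup>2 * mean_dir2 \<xi> T k \<le> (s k)\<^sup>2 * (6 * M1\<^sup>2 * mean_dist2 \<xi> T k + Y + 3 * (\<gamma> k)\<^sup>2)"
    using mean_dir2_le[of \<xi> T k] by (intro mult_left_mono) (auto simp: Y_def)
  moreover have "(s k)\<^sup>2 * (6 * M1\<^sup>2 * mean_dist2 \<xi> T k) = 24 * M1\<^sup>2 / \<mu>\<^sup>2 / r\<^sup>2 * mean_dist2 \<xi> T k"
    by (simp add: s2)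
  moreover have "(s k)\<^sup>2 * Y \<le> 4 * Y / \<mu>\<^sup>2 / r"
  proof -
    have "(s k)\<^sup>2 * Y = 4 * Y / \<mu>\<^sup>2 / r\<^sup>2" by (simp add: s2)
    also have "\<dots> \<le> 4 * Y / \<mu>\<^sup>2 / r"
      using r mult_left_mono[of 1 r r] \<open>0 \<le> Y\<close> by (intro divide_left_mono) (auto simp: power2_eq_square)
    finally show ?thesis .
  qed
  moreover have "(s k)\<^sup>2 * (3 * (\<gamma> k)\<^sup>2) \<le> (s k)\<^sup>2 * (3 * (C * r))"
    using \<gamma>_square_le_linear[OF k] by (intro mult_left_mono) (auto simp: C_def r_def)
  moreover have "(s k)\<^sup>2 * (3 * (C * r)) = 12 * C / \<mu>\<^sup>2 / r"
    unfolding s2 using r by (simp add: power2_eq_square field_simps)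
  ultimately show ?thesis
    unfolding r_def[symmetric] Y_def[symmetric] C_def[symmetric]
    by (simp add: distrib_left add_divide_distrib)
qed

lemma penalty_error_le: "\<exists>B\<ge>0. \<forall>k\<ge>1. 2 * s k * \<gamma> k * avg_hdelta k xopt \<le> B / real k"
proof -
  obtain A where "0 \<le> A" and A: "\<And>k. 1 \<le> k \<Longrightarrow> avg_hdelta k xopt \<le> A * \<delta> k"
    using avg_hdelta_xopt_le by blast
  define C where "C = (2 * g) powr (2 * g)"
  have "2 * s k * \<gamma> k * avg_hdelta k xopt \<le> 4 * A * (1 + C) / \<mu> / real k" if k: "1 \<le> k" for k
  proof -
    have "2 * s k * \<gamma> k * avg_hdelta k xopt \<le> 2 * s k * A * (\<gamma> k * \<delta> k)"
      using mult_left_mono[OF A[OF k], of "2 * s k * \<gamma> k"] s_pos[OF k] \<gamma>_nonneg[of k]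
      by (simp add: algebra_simps)
    also have "\<dots> \<le> 2 * s k * A * (1 + C)"
      using \<gamma>_mult_\<delta>_le[OF k] s_pos[OF k] \<open>0 \<le> A\<close> by (intro mult_left_mono) (auto simp: C_def)
    also have "\<dots> = 4 * A * (1 + C) / \<mu> / real k" by (simp add: s_def)
    finally show ?thesis .
  qed
  moreover have "0 \<le> 4 * A * (1 + C) / \<mu>" using \<open>0 \<le> A\<close> mu_pos by (simp add: C_def)
  ultimately show ?thesis by blast
qed

lemma mean_dist2_recursion:
  "\<exists>A \<beta>. 0 \<le> A \<and> 0 \<le> \<beta> \<and> (\<forall>\<xi> T k. 1 \<le> k \<longrightarrow> k \<le> T \<longrightarrow>
     mean_dist2 \<xi> T (Suc k) \<le> (1 - 2 / real k + A / (real k)\<^sup>2) * mean_dist2 \<xi> T k + \<beta> / real k)"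
proof -
  obtain B where "0 \<le> B" and B: "\<And>k. 1 \<le> k \<Longrightarrow> 2 * s k * \<gamma> k * avg_hdelta k xopt \<le> B / real k"
    using penalty_error_le by blast
  define \<beta> where "\<beta> = 2 * (norm (sg xopt))\<^sup>2 / \<mu>\<^sup>2
    + (4 * (6 * M1\<^sup>2 * (norm xopt)\<^sup>2 + 3 * M2\<^sup>2) + 12 * (2 * g) powr (2 * g)) / \<mu>\<^sup>2 + B"
  have "mean_dist2 \<xi> T (Suc k) \<le> (1 - 2 / real k + 24 * M1\<^sup>2 / \<mu>\<^sup>2 / (real k)\<^sup>2) * mean_dist2 \<xi> T k
      + \<beta> / real k" if k: "1 \<le> k" "k \<le> T" for \<xi> T k
  proof -
    have "2 * s k * (\<mu> / 2 * mean_dist2 \<xi> T k) = 2 / real k * mean_dist2 \<xi> T k"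
      using mu_pos by (simp add: s_def)
    then show ?thesis
      using mean_dist2_Suc_le[OF k, of \<xi>] gap_error_le[OF k(1), of \<xi> T] dir2_error_le[OF k(1), of \<xi> T] B[OF k(1)]
      by (simp add: \<beta>_def algebra_simps add_divide_distrib)
  qed
  moreover have "0 \<le> \<beta>" using \<open>0 \<le> B\<close> by (simp add: \<beta>_def)
  ultimately show ?thesis by (intro exI[of _ "24 * M1\<^sup>2 / \<mu>\<^sup>2"] exI[of _ \<beta>]) auto
qed

lemma mean_dist2_bounded: "\<exists>K\<ge>0. \<forall>\<xi> T k. 1 \<le> k \<longrightarrow> k \<le> Suc T \<longrightarrow> mean_dist2 \<xi> T k \<le> K * (1 + (norm \<xi>)\<^sup>2)"
proof -
  obtain A \<beta> where A: "0 \<le> A" and \<beta>: "0 \<le> \<beta>" and rec: "\<And>\<xi> T k. 1 \<le> k \<Longrightarrow> k \<le> T \<Longrightarrow>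
      mean_dist2 \<xi> T (Suc k) \<le> (1 - 2 / real k + A / (real k)\<^sup>2) * mean_dist2 \<xi> T k + \<beta> / real k"
    using mean_dist2_recursion by blast
  define K where "K = (2 + A) ^ (nat \<lceil>A\<rceil> + 1) * (2 + 2 * (norm xopt)\<^sup>2 + \<beta>)"
  have "mean_dist2 \<xi> T k \<le> K * (1 + (norm \<xi>)\<^sup>2)" if k: "1 \<le> k" "k \<le> Suc T" for \<xi> T k
  proof -
    have "(norm (\<xi> - xopt))\<^sup>2 \<le> 2 * ((norm \<xi>)\<^sup>2 + (norm xopt)\<^sup>2)"
      using norm_triangle_ineq4[of \<xi> xopt] square_sum_le[of "norm \<xi>" "norm xopt"]
      by (smt (verit) norm_ge_zero power_mono)
    moreover have "0 \<le> \<beta> * (norm \<xi>)\<^sup>2" "0 \<le> (norm xopt)\<^sup>2 * (norm \<xi>)\<^sup>2" using \<beta> by simp_all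
    ultimately have "mean_dist2 \<xi> T 1 + \<beta>
        \<le> 2 + 2 * (norm xopt)\<^sup>2 + \<beta> + 2 * (norm \<xi>)\<^sup>2 + 2 * ((norm xopt)\<^sup>2 * (norm \<xi>)\<^sup>2) + \<beta> * (norm \<xi>)\<^sup>2"
      unfolding mean_dist2_1 by (smt (verit))
    also have "\<dots> = (2 + 2 * (norm xopt)\<^sup>2 + \<beta>) * (1 + (norm \<xi>)\<^sup>2)"
      by (simp add: algebra_simps)
    finally have "mean_dist2 \<xi> T 1 + \<beta> \<le> (2 + 2 * (norm xopt)\<^sup>2 + \<beta>) * (1 + (norm \<xi>)\<^sup>2)" .
    then have "(2 + A) ^ (nat \<lceil>A\<rceil> + 1) * (mean_dist2 \<xi> T 1 + \<beta>) \<le> K * (1 + (norm \<xi>)\<^sup>2)"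
      unfolding K_def mult.assoc using A by (intro mult_left_mono) auto
    with perturbed_contraction_bounded[where e = "mean_dist2 \<xi> T", OF A \<beta> mean_dist2_nonneg rec k]
    show ?thesis by simp
  qed
  moreover have "0 \<le> K" using A \<beta> by (simp add: K_def)
  ultimately show ?thesis by blast
qed

lemma mean_penalty_bounded:
  "\<exists>P\<ge>0. \<forall>\<xi> T k. 1 \<le> k \<longrightarrow> k \<le> T \<longrightarrow> mean_penalty \<xi> T k \<le> P * (1 + (norm \<xi>)\<^sup>2)"
proof -
  obtain K where "0 \<le> K" and K: "\<And>\<xi> T k. 1 \<le> k \<Longrightarrow> k \<le> Suc T \<Longrightarrow> mean_dist2 \<xi> T k \<le> K * (1 + (norm \<xi>)\<^sup>2)"
    using mean_dist2_bounded by blast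
  obtain B where "0 \<le> B" and B: "\<And>\<xi> T k. 1 \<le> k \<Longrightarrow> mean_penalty \<xi> T k \<le> mean_dist2 \<xi> T k + B"
    using mean_penalty_le by blast
  have "mean_penalty \<xi> T k \<le> (K + B) * (1 + (norm \<xi>)\<^sup>2)" if "1 \<le> k" "k \<le> T" for \<xi> T k
    using K[of k T \<xi>] B[of k \<xi> T] that \<open>0 \<le> B\<close> mult_left_mono[of 1 "1 + (norm \<xi>)\<^sup>2" B]
    by (simp add: distrib_right)
  then show ?thesis using \<open>0 \<le> K\<close> \<open>0 \<le> B\<close> by (intro exI[of _ "K + B"]) auto
qed

definition wavg :: "(nat \<Rightarrow> 'a) \<Rightarrow> nat \<Rightarrow> 'a" where
  "wavg y t = (1 / (\<Sum>k=1..t. 1 / s k)) *\<^sub>R (\<Sum>k=1..t. (1 / s k) *\<^sub>R y k)"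

lemma sum_inverse_s: "(\<Sum>k=1..t. 1 / s k) = \<mu> * real t * (real t + 1) / 4"
proof -
  have "(\<Sum>k=1..t. 1 / s k) = \<mu> / 2 * (\<Sum>k=1..t. real k)"
    by (simp add: inverse_s sum_distrib_left)
  also have "\<dots> = \<mu> * real t * (real t + 1) / 4"
    using double_gauss_sum_from_Suc_0[of t, where 'a = real] by simp
  finally show ?thesis .
qed

lemma sum_inverse_s_ge: "\<mu> * (real t)\<^sup>2 / 4 \<le> (\<Sum>k=1..t. 1 / s k)"
proof -
  have "real t * real t \<le> real t * (real t + 1)" by (simp add: distrib_left)
  then show ?thesis unfolding sum_inverse_s using mu_pos
    by (simp add: power2_eq_square divide_right_mono mult.assoc)
qed

lemma sum_inverse_s_pos: "1 \<le> t \<Longrightarrow> 0 < (\<Sum>k=1..t. 1 / s k)"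
  unfolding sum_inverse_s using mu_pos by simp

lemma convex_on_wavg_le:
  assumes \<phi>: "convex_on UNIV \<phi>" and t: "1 \<le> t"
  shows "\<phi> (wavg y t) \<le> (\<Sum>k=1..t. (1 / s k) * \<phi> (y k)) / (\<Sum>k=1..t. 1 / s k)"
proof -
  define W where "W = (\<Sum>k=1..t. 1 / s k)"
  have W: "0 < W" using sum_inverse_s_pos[OF t] by (simp add: W_def)
  have avg: "wavg y t = (\<Sum>k=1..t. (1 / s k / W) *\<^sub>R y k)"
    by (simp add: wavg_def W_def scaleR_sum_right ac_simps)
  have "(\<Sum>k=1..t. 1 / s k / W) = 1"
    using W unfolding sum_divide_distrib[symmetric] W_def[symmetric] by simp
  moreover have "0 \<le> 1 / s k / W" if "k \<in> {1..t}" for k using that s_pos[of k] W by simp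
  ultimately have "\<phi> (wavg y t) \<le> (\<Sum>k=1..t. (1 / s k / W) * \<phi> (y k))"
    unfolding avg using t by (intro convex_on_sum[OF _ _ \<phi>]) auto
  then show ?thesis by (simp add: W_def sum_divide_distrib)
qed

text \<open>The one-step inequality weighted by \<open>1 / s k = \<mu> k / 2\<close>; the weights make the distance
  terms telescope.\<close>
lemma weighted_gap_le:
  assumes k: "1 \<le> k" "k \<le> T"
  shows "(1 / s k) * mean_gap \<xi> T k
    \<le> \<mu>\<^sup>2 * (real k - 1)\<^sup>2 / 8 * mean_dist2 \<xi> T k - \<mu>\<^sup>2 * (real k)\<^sup>2 / 8 * mean_dist2 \<xi> T (Suc k)
      + (mean_dir2 \<xi> T k / 2 + (1 / s k) * \<gamma> k * avg_hdelta k xopt)"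
proof -
  define c where "c = \<mu>\<^sup>2 * (real k)\<^sup>2 / 8"
  have "0 \<le> c" by (simp add: c_def)
  then have "c * mean_dist2 \<xi> T (Suc k) \<le> c * (mean_dist2 \<xi> T k
      - 2 * s k * (mean_gap \<xi> T k + \<mu> / 2 * mean_dist2 \<xi> T k)
      + (s k)\<^sup>2 * mean_dir2 \<xi> T k + 2 * s k * \<gamma> k * avg_hdelta k xopt)"
    using mean_dist2_Suc_le[OF k] by (rule mult_left_mono[rotated])
  also have "\<dots> = \<mu>\<^sup>2 * ((real k)\<^sup>2 - 2 * real k) / 8 * mean_dist2 \<xi> T k - (1 / s k) * mean_gap \<xi> T k
      + mean_dir2 \<xi> T k / 2 + (1 / s k) * \<gamma> k * avg_hdelta k xopt"
    using mu_pos k by (simp add: c_def s_def field_simps power2_eq_square)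
  also have "\<mu>\<^sup>2 * ((real k)\<^sup>2 - 2 * real k) / 8 * mean_dist2 \<xi> T k
      \<le> \<mu>\<^sup>2 * (real k - 1)\<^sup>2 / 8 * mean_dist2 \<xi> T k"
    by (intro mult_right_mono divide_right_mono mult_left_mono mean_dist2_nonneg)
      (auto simp: power2_eq_square algebra_simps)
  finally show ?thesis unfolding c_def by linarith
qed

lemma weighted_gap_sum_le:
  "n \<le> T \<Longrightarrow> (\<Sum>k=1..n. (1 / s k) * mean_gap \<xi> T k)
    \<le> (\<Sum>k=1..n. mean_dir2 \<xi> T k / 2 + (1 / s k) * \<gamma> k * avg_hdelta k xopt)
      - \<mu>\<^sup>2 * (real n)\<^sup>2 / 8 * mean_dist2 \<xi> T (Suc n)"
proof (induction n)
  case (Suc n)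
  then show ?case using weighted_gap_le[of "Suc n" T \<xi>] by simp
qed simp

lemma seq_avg_f_wavg_le:
  assumes T: "1 \<le> T"
  shows "seq_avg m T (\<lambda>c. f (wavg (iterates \<xi> c) T)) - f xopt
    \<le> (\<Sum>k=1..T. (1 / s k) * mean_gap \<xi> T k) / (\<Sum>k=1..T. 1 / s k)"
proof -
  define W where "W = (\<Sum>k=1..T. 1 / s k)"
  have W: "0 < W" using sum_inverse_s_pos[OF T] by (simp add: W_def)
  define G where "G c k = f (iterates \<xi> c k) - f xopt + \<gamma> k * avg_hdelta k (iterates \<xi> c k)" for c k
  have "seq_avg m T (\<lambda>c. f (wavg (iterates \<xi> c) T))
      \<le> seq_avg m T (\<lambda>c. (\<Sum>k=1..T. (1 / s k) * f (iterates \<xi> c k)) / W)"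
    unfolding W_def using convex_on_wavg_le[OF f_convex T] by (intro seq_avg_mono)
  also have "\<dots> \<le> seq_avg m T (\<lambda>c. (\<Sum>k=1..T. (1 / s k) * (G c k + f xopt)) / W)"
    using W less_imp_le[OF s_pos] \<gamma>_nonneg avg_hdelta_nonneg
    by (intro seq_avg_mono divide_right_mono sum_mono mult_left_mono) (auto simp: G_def)
  also have "(\<lambda>c. (\<Sum>k=1..T. (1 / s k) * (G c k + f xopt)) / W)
      = (\<lambda>c. (\<Sum>k=1..T. (1 / s k) * G c k) / W + f xopt)"
  proof
    fix c
    have "(\<Sum>k=1..T. (1 / s k) * (G c k + f xopt)) = (\<Sum>k=1..T. (1 / s k) * G c k) + f xopt * W"
      by (simp add: distrib_left sum.distrib W_def sum_distrib_left mult.commute)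
    then show "(\<Sum>k=1..T. (1 / s k) * (G c k + f xopt)) / W = (\<Sum>k=1..T. (1 / s k) * G c k) / W + f xopt"
      using W by (simp add: add_divide_distrib)
  qed
  also have "seq_avg m T \<dots> = (\<Sum>k=1..T. (1 / s k) * mean_gap \<xi> T k) / W + f xopt"
    by (simp add: G_def mean_gap_def seq_avg_add seq_avg_divide seq_avg_sum seq_avg_mult_left
        seq_avg_const[OF m_pos])
  finally show ?thesis by (simp add: W_def)
qed

lemma f_xopt_le_seq_avg_f_wavg:
  "\<exists>L\<ge>0. \<forall>\<xi> T. 1 \<le> T \<longrightarrow> f xopt - seq_avg m T (\<lambda>c. f (wavg (iterates \<xi> c) T))
     \<le> L * ((\<Sum>k=1..T. (1 / s k) * mean_penalty \<xi> T k) / (\<Sum>k=1..T. 1 / s k))"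
proof -
  obtain \<Lambda> where "0 \<le> \<Lambda>" and \<Lambda>: "\<And>x. f xopt \<le> f x + \<Lambda> * violation m a b x"
    using exact_penalty_xopt by blast
  define A where "A = real m * (\<Sum>j<m. norm (a j))"
  have "0 \<le> A" by (simp add: A_def sum_nonneg)
  have "f xopt - seq_avg m T (\<lambda>c. f (wavg (iterates \<xi> c) T))
      \<le> (\<Lambda> * A) * ((\<Sum>k=1..T. (1 / s k) * mean_penalty \<xi> T k) / (\<Sum>k=1..T. 1 / s k))"
    if T: "1 \<le> T" for \<xi> T
  proof -
    define W where "W = (\<Sum>k=1..T. 1 / s k)"
    have W: "0 < W" using sum_inverse_s_pos[OF T] by (simp add: W_def)
    define P where "P c = (\<Sum>k=1..T. (1 / s k) * avg_hdelta k (iterates \<xi> c k)) / W" for c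
    have "f xopt \<le> f (wavg (iterates \<xi> c) T) + (\<Lambda> * A) * P c" for c
    proof -
      have "violation m a b (wavg (iterates \<xi> c) T)
          \<le> (\<Sum>k=1..T. (1 / s k) * violation m a b (iterates \<xi> c k)) / W"
        unfolding W_def by (rule convex_on_wavg_le[OF convex_on_violation T])
      also have "\<dots> \<le> (\<Sum>k=1..T. (1 / s k) * (A * avg_hdelta k (iterates \<xi> c k))) / W"
        using W less_imp_le[OF s_pos] violation_le_avg_hdelta
        by (intro divide_right_mono sum_mono mult_left_mono) (auto simp: A_def)
      also have "\<dots> = A * P c" by (simp add: P_def sum_distrib_left algebra_simps)
      finally show ?thesis
        using \<Lambda>[of "wavg (iterates \<xi> c) T"] mult_left_mono[of _ _ \<Lambda>] \<open>0 \<le> \<Lambda>\<close>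
        by (smt (verit) mult.assoc)
    qed
    then have "seq_avg m T (\<lambda>_. f xopt) \<le> seq_avg m T (\<lambda>c. f (wavg (iterates \<xi> c) T) + (\<Lambda> * A) * P c)"
      by (intro seq_avg_mono)
    then show ?thesis
      by (simp add: P_def W_def mean_penalty_def seq_avg_const[OF m_pos] seq_avg_add seq_avg_mult_left
          seq_avg_divide seq_avg_sum)
  qed
  then show ?thesis using \<open>0 \<le> \<Lambda>\<close> \<open>0 \<le> A\<close> by (intro exI[of _ "\<Lambda> * A"]) auto
qed

text \<open>Once \<open>\<gamma> k\<close> exceeds the exact-penalty constant, the penalty is dominated by the gap.\<close>
lemma weighted_penalty_le:
  "\<exists>C\<ge>0. \<exists>k\<^sub>0. \<forall>\<xi> T k. k \<in> {1..T} \<longrightarrow> (1 / s k) * mean_penalty \<xi> T k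
     \<le> (1 / s k) * mean_gap \<xi> T k + (if k < k\<^sub>0 then C * (1 + (norm \<xi>)\<^sup>2) else 0)"
proof -
  obtain L where "0 \<le> L" and L: "\<And>\<xi> T k. 1 \<le> k \<Longrightarrow> (\<gamma> k - L) * mean_penalty \<xi> T k \<le> mean_gap \<xi> T k"
    using mean_gap_ge_penalty by blast
  obtain k\<^sub>0 where k\<^sub>0: "\<And>k. k\<^sub>0 \<le> k \<Longrightarrow> L + 1 \<le> \<gamma> k"
    using \<gamma>_unbounded by blast
  obtain P where "0 \<le> P" and P: "\<And>\<xi> T k. 1 \<le> k \<Longrightarrow> k \<le> T \<Longrightarrow> mean_penalty \<xi> T k \<le> P * (1 + (norm \<xi>)\<^sup>2)"
    using mean_penalty_bounded by blast
  define C where "C = \<mu> * real k\<^sub>0 / 2 * (L + 1) * P"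
  have "0 \<le> C" using \<open>0 \<le> L\<close> \<open>0 \<le> P\<close> mu_pos by (simp add: C_def)
  have "(1 / s k) * mean_penalty \<xi> T k
      \<le> (1 / s k) * mean_gap \<xi> T k + (if k < k\<^sub>0 then C * (1 + (norm \<xi>)\<^sup>2) else 0)"
    if k: "k \<in> {1..T}" for \<xi> T k
  proof -
    have w: "0 < 1 / s k" using s_pos[of k] k by simp
    have pen: "0 \<le> mean_penalty \<xi> T k" using mean_penalty_nonneg[of k] k by simp
    show ?thesis
    proof (cases "k < k\<^sub>0")
      case False
      then have "mean_penalty \<xi> T k \<le> (\<gamma> k - L) * mean_penalty \<xi> T k"
        using k\<^sub>0[of k] pen mult_right_mono[of 1 "\<gamma> k - L" "mean_penalty \<xi> T k"] by simp
      then have "mean_penalty \<xi> T k \<le> mean_gap \<xi> T k" using L[of k \<xi> T] k by simp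
      then show ?thesis using False w by (simp add: divide_right_mono)
    next
      case True
      have "mean_penalty \<xi> T k \<le> P * (1 + (norm \<xi>)\<^sup>2)" using P[of k T \<xi>] k by simp
      moreover have "1 / s k \<le> \<mu> * real k\<^sub>0 / 2" using True mu_pos by (simp add: inverse_s)
      ultimately have "(1 / s k) * ((L + 1) * mean_penalty \<xi> T k)
          \<le> (\<mu> * real k\<^sub>0 / 2) * ((L + 1) * (P * (1 + (norm \<xi>)\<^sup>2)))"
        using w pen \<open>0 \<le> L\<close> mu_pos by (intro mult_mono mult_left_mono) auto
      then have early: "(1 / s k) * ((L + 1) * mean_penalty \<xi> T k) \<le> C * (1 + (norm \<xi>)\<^sup>2)"
        by (simp add: C_def ac_simps)
      have ineq: "mean_penalty \<xi> T k \<le> mean_gap \<xi> T k + (L + 1) * mean_penalty \<xi> T k"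
        using L[of k \<xi> T] k \<gamma>_nonneg[of k] pen by (simp add: algebra_simps) (smt (verit) mult_nonneg_nonneg)
      have "(1 / s k) * mean_penalty \<xi> T k
          \<le> (1 / s k) * mean_gap \<xi> T k + (1 / s k) * ((L + 1) * mean_penalty \<xi> T k)"
        using mult_left_mono[OF ineq, of "1 / s k"] w by (simp add: distrib_left)
      with early True show ?thesis by simp
    qed
  qed
  then show ?thesis using \<open>0 \<le> C\<close> by blast
qed

lemma weighted_penalty_sum_le:
  "\<exists>C\<ge>0. \<forall>\<xi> T. (\<Sum>k=1..T. (1 / s k) * mean_penalty \<xi> T k)
     \<le> (\<Sum>k=1..T. (1 / s k) * mean_gap \<xi> T k) + C * (1 + (norm \<xi>)\<^sup>2)"
proof -
  obtain C k\<^sub>0 where "0 \<le> C" and each: "\<And>\<xi> T k. k \<in> {1..T} \<Longrightarrow> (1 / s k) * mean_penalty \<xi> T k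
      \<le> (1 / s k) * mean_gap \<xi> T k + (if k < k\<^sub>0 then C * (1 + (norm \<xi>)\<^sup>2) else 0)"
    using weighted_penalty_le by blast
  have "(\<Sum>k=1..T. (1 / s k) * mean_penalty \<xi> T k)
      \<le> (\<Sum>k=1..T. (1 / s k) * mean_gap \<xi> T k) + real k\<^sub>0 * C * (1 + (norm \<xi>)\<^sup>2)" for \<xi> T
  proof -
    have "(\<Sum>k=1..T. (1 / s k) * mean_penalty \<xi> T k)
        \<le> (\<Sum>k=1..T. (1 / s k) * mean_gap \<xi> T k) + (\<Sum>k=1..T. if k < k\<^sub>0 then C * (1 + (norm \<xi>)\<^sup>2) else 0)"
      unfolding sum.distrib[symmetric] by (intro sum_mono each)
    also have "(\<Sum>k=1..T. if k < k\<^sub>0 then C * (1 + (norm \<xi>)\<^sup>2) else 0) = (\<Sum>k\<in>{1..T} \<inter> {..<k\<^sub>0}. C * (1 + (norm \<xi>)\<^sup>2))"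
      unfolding sum.inter_restrict[OF finite_atLeastAtMost] by simp
    also have "\<dots> \<le> (\<Sum>k<k\<^sub>0. C * (1 + (norm \<xi>)\<^sup>2))" using \<open>0 \<le> C\<close> by (intro sum_mono2) auto
    finally show ?thesis by simp
  qed
  then show ?thesis using \<open>0 \<le> C\<close> by (intro exI[of _ "real k\<^sub>0 * C"]) auto
qed

lemma step_error_le:
  "\<exists>C\<ge>0. \<forall>\<xi> T k. 1 \<le> k \<longrightarrow> k \<le> T \<longrightarrow>
     mean_dir2 \<xi> T k / 2 + (1 / s k) * \<gamma> k * avg_hdelta k xopt \<le> C * (1 + (norm \<xi>)\<^sup>2) * (1 + (\<gamma> T)\<^sup>2)"
proof -
  obtain K where "0 \<le> K" and K: "\<And>\<xi> T k. 1 \<le> k \<Longrightarrow> k \<le> Suc T \<Longrightarrow> mean_dist2 \<xi> T k \<le> K * (1 + (norm \<xi>)\<^sup>2)"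
    using mean_dist2_bounded by blast
  obtain A\<^sub>0 where "0 \<le> A\<^sub>0" and A\<^sub>0: "\<And>k. 1 \<le> k \<Longrightarrow> avg_hdelta k xopt \<le> A\<^sub>0 * \<delta> k"
    using avg_hdelta_xopt_le by blast
  define Y where "Y = 6 * M1\<^sup>2 * (norm xopt)\<^sup>2 + 3 * M2\<^sup>2"
  define C where "C = (6 * M1\<^sup>2 * K + Y + 3) / 2 + \<mu> * A\<^sub>0 / 2"
  have "mean_dir2 \<xi> T k / 2 + (1 / s k) * \<gamma> k * avg_hdelta k xopt \<le> C * (1 + (norm \<xi>)\<^sup>2) * (1 + (\<gamma> T)\<^sup>2)"
    if k: "1 \<le> k" "k \<le> T" for \<xi> T k
  proof -
    define Z L where "Z = 1 + (norm \<xi>)\<^sup>2" and "L = 1 + (\<gamma> T)\<^sup>2"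
    have Z: "1 \<le> Z" and L: "1 \<le> L" by (simp_all add: Z_def L_def)
    have ZL: "1 \<le> Z * L" "Z \<le> Z * L" "L \<le> Z * L"
      using Z L mult_mono[OF Z L] by (simp_all add: mult_le_cancel_left1 mult_le_cancel_right1)
    have \<gamma>_le: "\<gamma> k \<le> \<gamma> T" using \<gamma>_mono k by simp
    have \<gamma>L: "1 + (\<gamma> k)\<^sup>2 \<le> L" using power_mono[OF \<gamma>_le \<gamma>_nonneg, of 2] by (simp add: L_def)
    moreover have "6 * M1\<^sup>2 * mean_dist2 \<xi> T k \<le> 6 * M1\<^sup>2 * (K * Z)"
      using K[of k T \<xi>] k by (intro mult_left_mono) (auto simp: Z_def)
    ultimately have "mean_dir2 \<xi> T k \<le> 6 * M1\<^sup>2 * (K * Z) + Y + 3 * L"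
      using \<gamma>L mean_dir2_le[of \<xi> T k] unfolding Y_def by linarith
    also have "\<dots> \<le> (6 * M1\<^sup>2 * K + Y + 3) * (Z * L)"
      using ZL \<open>0 \<le> K\<close> mult_left_mono[OF ZL(1), of Y] mult_left_mono[OF ZL(2), of "6 * M1\<^sup>2 * K"]
        mult_left_mono[OF ZL(3), of 3]
      by (simp add: Y_def algebra_simps)
    finally have dir: "mean_dir2 \<xi> T k / 2 \<le> (6 * M1\<^sup>2 * K + Y + 3) / 2 * (Z * L)" by simp
    have "avg_hdelta k xopt \<le> A\<^sub>0 * (1 / real k)"
      using A\<^sub>0[OF k(1)] mult_left_mono[OF \<delta>_le_inverse[OF k(1)] \<open>0 \<le> A\<^sub>0\<close>] by linarith
    then have "(1 / s k) * \<gamma> k * avg_hdelta k xopt \<le> (1 / s k) * \<gamma> k * (A\<^sub>0 * (1 / real k))"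
      using s_pos[OF k(1)] \<gamma>_nonneg[of k] by (intro mult_left_mono) auto
    also have "\<dots> = \<mu> * A\<^sub>0 / 2 * \<gamma> k" using k by (simp add: inverse_s)
    also have "\<dots> \<le> \<mu> * A\<^sub>0 / 2 * (Z * L)"
      using le_one_plus_square[of "\<gamma> k"] \<gamma>L ZL \<open>0 \<le> A\<^sub>0\<close> mu_pos
      by (intro mult_left_mono) auto
    finally have pen: "(1 / s k) * \<gamma> k * avg_hdelta k xopt \<le> \<mu> * A\<^sub>0 / 2 * (Z * L)" .
    have "C * Z * L = (6 * M1\<^sup>2 * K + Y + 3) / 2 * (Z * L) + \<mu> * A\<^sub>0 / 2 * (Z * L)"
      by (simp add: C_def algebra_simps)
    with dir pen show ?thesis unfolding Z_def[symmetric] L_def[symmetric] by linarith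
  qed
  moreover have "0 \<le> C" using \<open>0 \<le> K\<close> \<open>0 \<le> A\<^sub>0\<close> mu_pos by (simp add: C_def Y_def)
  ultimately show ?thesis by blast
qed

lemma weighted_gap_sum_bound:
  "\<exists>C\<ge>0. \<forall>\<xi> T. (\<Sum>k=1..T. (1 / s k) * mean_gap \<xi> T k)
     \<le> real T * (C * (1 + (norm \<xi>)\<^sup>2) * (1 + (\<gamma> T)\<^sup>2))"
proof -
  obtain C where "0 \<le> C" and C: "\<And>\<xi> T k. 1 \<le> k \<Longrightarrow> k \<le> T \<Longrightarrow>
      mean_dir2 \<xi> T k / 2 + (1 / s k) * \<gamma> k * avg_hdelta k xopt \<le> C * (1 + (norm \<xi>)\<^sup>2) * (1 + (\<gamma> T)\<^sup>2)"
    using step_error_le by blast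
  have "(\<Sum>k=1..T. (1 / s k) * mean_gap \<xi> T k)
      \<le> real T * (C * (1 + (norm \<xi>)\<^sup>2) * (1 + (\<gamma> T)\<^sup>2))" for \<xi> T
  proof -
    have "0 \<le> \<mu>\<^sup>2 * (real T)\<^sup>2 / 8 * mean_dist2 \<xi> T (Suc T)"
      by (intro mult_nonneg_nonneg mean_dist2_nonneg) simp
    then have "(\<Sum>k=1..T. (1 / s k) * mean_gap \<xi> T k)
        \<le> (\<Sum>k=1..T. mean_dir2 \<xi> T k / 2 + (1 / s k) * \<gamma> k * avg_hdelta k xopt)"
      using weighted_gap_sum_le[OF order_refl[of T], of \<xi>] by linarith
    also have "\<dots> \<le> real T * (C * (1 + (norm \<xi>)\<^sup>2) * (1 + (\<gamma> T)\<^sup>2))"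
      using sum_mono[of "{1..T}" _ "\<lambda>_. C * (1 + (norm \<xi>)\<^sup>2) * (1 + (\<gamma> T)\<^sup>2)"] C[of _ T \<xi>] by simp
    finally show ?thesis .
  qed
  then show ?thesis using \<open>0 \<le> C\<close> by blast
qed

lemma div_sum_inverse_s_le:
  assumes "1 \<le> T" "0 \<le> X"
  shows "real T * X / (\<Sum>k=1..T. 1 / s k) \<le> 4 / \<mu> * X / real T"
proof -
  have "real T * X / (\<Sum>k=1..T. 1 / s k) \<le> real T * X / (\<mu> * (real T)\<^sup>2 / 4)"
    using assms mu_pos sum_inverse_s_ge[of T] sum_inverse_s_pos[of T] by (intro divide_left_mono) auto
  also have "\<dots> = 4 / \<mu> * X / real T" using assms by (simp add: power2_eq_square)
  finally show ?thesis .
qed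

lemma seq_avg_f_wavg_upper_rate:
  "\<exists>K\<ge>0. \<forall>\<xi> T. 1 \<le> T \<longrightarrow> seq_avg m T (\<lambda>c. f (wavg (iterates \<xi> c) T)) - f xopt
     \<le> K * (1 + (norm \<xi>)\<^sup>2) * (1 + (\<gamma> T)\<^sup>2) / real T"
proof -
  obtain C where "0 \<le> C" and C: "\<And>\<xi> T. (\<Sum>k=1..T. (1 / s k) * mean_gap \<xi> T k)
      \<le> real T * (C * (1 + (norm \<xi>)\<^sup>2) * (1 + (\<gamma> T)\<^sup>2))"
    using weighted_gap_sum_bound by blast
  have "seq_avg m T (\<lambda>c. f (wavg (iterates \<xi> c) T)) - f xopt
      \<le> 4 / \<mu> * C * (1 + (norm \<xi>)\<^sup>2) * (1 + (\<gamma> T)\<^sup>2) / real T" if T: "1 \<le> T" for \<xi> T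
  proof -
    have "seq_avg m T (\<lambda>c. f (wavg (iterates \<xi> c) T)) - f xopt
        \<le> real T * (C * (1 + (norm \<xi>)\<^sup>2) * (1 + (\<gamma> T)\<^sup>2)) / (\<Sum>k=1..T. 1 / s k)"
      using seq_avg_f_wavg_le[OF T, of \<xi>]
        divide_right_mono[OF C[of \<xi> T] less_imp_le[OF sum_inverse_s_pos[OF T]]] by linarith
    also have "\<dots> \<le> 4 / \<mu> * (C * (1 + (norm \<xi>)\<^sup>2) * (1 + (\<gamma> T)\<^sup>2)) / real T"
      using T \<open>0 \<le> C\<close> by (intro div_sum_inverse_s_le) auto
    finally show ?thesis by (simp only: mult.assoc)
  qed
  then show ?thesis using \<open>0 \<le> C\<close> mu_pos by (intro exI[of _ "4 / \<mu> * C"]) auto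
qed

lemma seq_avg_f_wavg_lower_rate:
  "\<exists>K\<ge>0. \<forall>\<xi> T. 1 \<le> T \<longrightarrow> f xopt - seq_avg m T (\<lambda>c. f (wavg (iterates \<xi> c) T))
     \<le> K * (1 + (norm \<xi>)\<^sup>2) * (1 + (\<gamma> T)\<^sup>2) / real T"
proof -
  obtain L where "0 \<le> L" and L: "\<And>\<xi> T. 1 \<le> T \<Longrightarrow> f xopt - seq_avg m T (\<lambda>c. f (wavg (iterates \<xi> c) T))
      \<le> L * ((\<Sum>k=1..T. (1 / s k) * mean_penalty \<xi> T k) / (\<Sum>k=1..T. 1 / s k))"
    using f_xopt_le_seq_avg_f_wavg by blast
  obtain C where "0 \<le> C" and C: "\<And>\<xi> T. (\<Sum>k=1..T. (1 / s k) * mean_gap \<xi> T k)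
      \<le> real T * (C * (1 + (norm \<xi>)\<^sup>2) * (1 + (\<gamma> T)\<^sup>2))"
    using weighted_gap_sum_bound by blast
  obtain C' where "0 \<le> C'" and C': "\<And>\<xi> T. (\<Sum>k=1..T. (1 / s k) * mean_penalty \<xi> T k)
      \<le> (\<Sum>k=1..T. (1 / s k) * mean_gap \<xi> T k) + C' * (1 + (norm \<xi>)\<^sup>2)"
    using weighted_penalty_sum_le by blast
  have "f xopt - seq_avg m T (\<lambda>c. f (wavg (iterates \<xi> c) T))
      \<le> L * (4 / \<mu> * (C + C')) * (1 + (norm \<xi>)\<^sup>2) * (1 + (\<gamma> T)\<^sup>2) / real T" if T: "1 \<le> T" for \<xi> T
  proof -
    define Z \<Gamma> where "Z = 1 + (norm \<xi>)\<^sup>2" and "\<Gamma> = 1 + (\<gamma> T)\<^sup>2"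
    have "1 \<le> Z" "1 \<le> \<Gamma>" by (simp_all add: Z_def \<Gamma>_def)
    then have "C' * Z \<le> real T * (C' * Z * \<Gamma>)"
      using T \<open>0 \<le> C'\<close> mult_mono[of 1 "real T" 1 \<Gamma>] mult_left_mono[of 1 "real T * \<Gamma>" "C' * Z"]
      by (simp add: ac_simps)
    then have pen: "(\<Sum>k=1..T. (1 / s k) * mean_penalty \<xi> T k) \<le> real T * ((C + C') * Z * \<Gamma>)"
      using C'[of \<xi> T] C[of \<xi> T] by (simp add: Z_def \<Gamma>_def algebra_simps)
    have "f xopt - seq_avg m T (\<lambda>c. f (wavg (iterates \<xi> c) T))
        \<le> L * (real T * ((C + C') * Z * \<Gamma>) / (\<Sum>k=1..T. 1 / s k))"
      using L[OF T, of \<xi>]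
        mult_left_mono[OF divide_right_mono[OF pen less_imp_le[OF sum_inverse_s_pos[OF T]]] \<open>0 \<le> L\<close>]
      by linarith
    also have "\<dots> \<le> L * (4 / \<mu> * ((C + C') * Z * \<Gamma>) / real T)"
      using T \<open>0 \<le> C\<close> \<open>0 \<le> C'\<close> \<open>1 \<le> Z\<close> \<open>1 \<le> \<Gamma>\<close> \<open>0 \<le> L\<close>
      by (intro mult_left_mono div_sum_inverse_s_le) auto
    finally show ?thesis unfolding Z_def \<Gamma>_def by (simp only: mult.assoc times_divide_eq_right)
  qed
  then show ?thesis using \<open>0 \<le> L\<close> \<open>0 \<le> C\<close> \<open>0 \<le> C'\<close> mu_pos
    by (intro exI[of _ "L * (4 / \<mu> * (C + C'))"]) auto
qed

theorem seq_avg_f_wavg_rate: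
  "\<exists>K. \<forall>\<xi> T. 1 \<le> T \<longrightarrow> \<bar>seq_avg m T (\<lambda>c. f (wavg (iterates \<xi> c) T)) - f xopt\<bar>
     \<le> K * (1 + (norm \<xi>)\<^sup>2) * (1 + (\<gamma> T)\<^sup>2) / real T"
proof -
  obtain K\<^sub>1 where "0 \<le> K\<^sub>1" and upper: "\<And>\<xi> T. 1 \<le> T \<Longrightarrow> seq_avg m T (\<lambda>c. f (wavg (iterates \<xi> c) T)) - f xopt
      \<le> K\<^sub>1 * (1 + (norm \<xi>)\<^sup>2) * (1 + (\<gamma> T)\<^sup>2) / real T"
    using seq_avg_f_wavg_upper_rate by blast
  obtain K\<^sub>2 where "0 \<le> K\<^sub>2" and lower: "\<And>\<xi> T. 1 \<le> T \<Longrightarrow> f xopt - seq_avg m T (\<lambda>c. f (wavg (iterates \<xi> c) T))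
      \<le> K\<^sub>2 * (1 + (norm \<xi>)\<^sup>2) * (1 + (\<gamma> T)\<^sup>2) / real T"
    using seq_avg_f_wavg_lower_rate by blast
  have "\<bar>seq_avg m T (\<lambda>c. f (wavg (iterates \<xi> c) T)) - f xopt\<bar>
      \<le> (K\<^sub>1 + K\<^sub>2) * (1 + (norm \<xi>)\<^sup>2) * (1 + (\<gamma> T)\<^sup>2) / real T" if "1 \<le> T" for \<xi> T
  proof -
    have "0 \<le> K\<^sub>1 * (1 + (norm \<xi>)\<^sup>2) * (1 + (\<gamma> T)\<^sup>2) / real T"
      and "0 \<le> K\<^sub>2 * (1 + (norm \<xi>)\<^sup>2) * (1 + (\<gamma> T)\<^sup>2) / real T"
      using \<open>0 \<le> K\<^sub>1\<close> \<open>0 \<le> K\<^sub>2\<close> by simp_all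
    moreover have "(K\<^sub>1 + K\<^sub>2) * (1 + (norm \<xi>)\<^sup>2) * (1 + (\<gamma> T)\<^sup>2) / real T
        = K\<^sub>1 * (1 + (norm \<xi>)\<^sup>2) * (1 + (\<gamma> T)\<^sup>2) / real T + K\<^sub>2 * (1 + (norm \<xi>)\<^sup>2) * (1 + (\<gamma> T)\<^sup>2) / real T"
      by (simp add: distrib_right add_divide_distrib)
    ultimately show ?thesis using upper[OF that, of \<xi>] lower[OF that, of \<xi>] by linarith
  qed
  then show ?thesis by blast
qed

lemma wavg_cong:
  assumes "\<And>k. k \<in> {1..t} \<Longrightarrow> y k = y' k"
  shows "wavg y t = wavg y' t"
proof -
  have "(\<Sum>k=1..t. (1 / s k) *\<^sub>R y k) = (\<Sum>k=1..t. (1 / s k) *\<^sub>R y' k)"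
    using assms by (intro sum.cong) auto
  then show ?thesis by (simp add: wavg_def)
qed

lemma norm_wavg_iterates_le_linear: "\<exists>\<alpha> \<beta>. \<forall>\<xi> c. norm (wavg (iterates \<xi> c) t) \<le> \<alpha> * norm \<xi> + \<beta>"
proof -
  obtain \<alpha> \<beta> where \<alpha>\<beta>: "\<And>k \<xi> c. norm (iterates \<xi> c k) \<le> \<alpha> k * norm \<xi> + \<beta> k"
    using norm_iterates_le_linear by metis
  define q where "q = \<bar>1 / (\<Sum>k=1..t. 1 / s k)\<bar>"
  have "norm (wavg (iterates \<xi> c) t)
      \<le> (q * (\<Sum>k=1..t. \<bar>1 / s k\<bar> * \<alpha> k)) * norm \<xi> + q * (\<Sum>k=1..t. \<bar>1 / s k\<bar> * \<beta> k)" for \<xi> c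
  proof -
    have "norm (wavg (iterates \<xi> c) t) \<le> q * (\<Sum>k=1..t. \<bar>1 / s k\<bar> * norm (iterates \<xi> c k))"
      using norm_sum[of "\<lambda>k. (1 / s k) *\<^sub>R iterates \<xi> c k" "{1..t}"]
      by (simp add: wavg_def q_def divide_right_mono)
    also have "\<dots> \<le> q * (\<Sum>k=1..t. \<bar>1 / s k\<bar> * (\<alpha> k * norm \<xi> + \<beta> k))"
      using \<alpha>\<beta> by (intro mult_left_mono sum_mono) (auto simp: q_def)
    finally show ?thesis by (simp add: algebra_simps sum.distrib sum_distrib_left sum_distrib_right)
  qed
  then show ?thesis by blast
qed

lemma abs_f_wavg_iterates_le_quadratic: "\<exists>C. \<forall>\<xi> c. \<bar>f (wavg (iterates \<xi> c) t)\<bar> \<le> C * (1 + (norm \<xi>)\<^sup>2)"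
proof -
  obtain \<alpha> \<beta> where \<alpha>\<beta>: "\<And>\<xi> c. norm (wavg (iterates \<xi> c) t) \<le> \<alpha> * norm \<xi> + \<beta>"
    using norm_wavg_iterates_le_linear by blast
  obtain C where "0 \<le> C" and C: "\<And>y. \<bar>f y\<bar> \<le> C * (1 + (norm y)\<^sup>2)"
    using abs_f_le_quadratic by blast
  have "\<bar>f (wavg (iterates \<xi> c) t)\<bar> \<le> (C * (1 + 2 * \<alpha>\<^sup>2 + 2 * \<beta>\<^sup>2)) * (1 + (norm \<xi>)\<^sup>2)" for \<xi> c
  proof -
    have "(norm (wavg (iterates \<xi> c) t))\<^sup>2 \<le> (\<alpha> * norm \<xi> + \<beta>)\<^sup>2"
      using \<alpha>\<beta>[of \<xi> c] by (intro power_mono) auto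
    also have "\<dots> \<le> 2 * \<alpha>\<^sup>2 * (norm \<xi>)\<^sup>2 + 2 * \<beta>\<^sup>2"
      using square_sum_le[of "\<alpha> * norm \<xi>" \<beta>] by (simp add: power_mult_distrib)
    also have "\<dots> \<le> (1 + 2 * \<alpha>\<^sup>2 + 2 * \<beta>\<^sup>2) * (1 + (norm \<xi>)\<^sup>2) - 1"
      by (simp add: algebra_simps)
    finally have "C * (1 + (norm (wavg (iterates \<xi> c) t))\<^sup>2) \<le> C * ((1 + 2 * \<alpha>\<^sup>2 + 2 * \<beta>\<^sup>2) * (1 + (norm \<xi>)\<^sup>2))"
      using \<open>0 \<le> C\<close> by (intro mult_left_mono) auto
    then show ?thesis using C[of "wavg (iterates \<xi> c) t"] by (simp add: mult.assoc)
  qed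
  then show ?thesis by blast
qed

lemma f_wavg_iterates_measurable:
  "sg \<in> borel_measurable borel \<Longrightarrow> (\<lambda>\<xi>. f (wavg (iterates \<xi> c) t)) \<in> borel_measurable borel"
  unfolding wavg_def
  by (intro measurable_compose[OF _ f_measurable] borel_measurable_scaleR borel_measurable_sum
      borel_measurable_const iterates_measurable)

lemma wavg_trajectory:
  assumes "\<And>k. 1 \<le> k \<Longrightarrow> y (Suc k) = step k (y k) (c k)"
  shows "wavg y t = wavg (iterates (y 1) c) t"
proof (rule wavg_cong)
  fix k :: nat assume "k \<in> {1..t}"
  then have "1 \<le> k" by simp
  then show "y k = iterates (y 1) c k"
  proof (induction k)
    case (Suc k)
    then show ?case using assms[of k] by (cases "k = 0") auto
  qed simp
qed

lemma iterates_random_measurable: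
  assumes sg: "sg \<in> borel_measurable borel" and X: "X \<in> borel_measurable M"
    and I: "\<And>k. I k \<in> measurable M (count_space UNIV)"
  shows "(\<lambda>\<omega>. iterates (X \<omega>) (\<lambda>l. I l \<omega>) k) \<in> borel_measurable M"
proof (induction k)
  case (Suc k)
  have "(\<lambda>\<omega>. step k (iterates (X \<omega>) (\<lambda>l. I l \<omega>) k) (I k \<omega>)) \<in> borel_measurable M"
  proof (rule measurable_compose_countable[where f = "\<lambda>j \<omega>. step k (iterates (X \<omega>) (\<lambda>l. I l \<omega>) k) j"])
    fix j
    from measurable_compose[OF Suc.IH step_measurable[OF sg]]
    show "(\<lambda>\<omega>. step k (iterates (X \<omega>) (\<lambda>l. I l \<omega>) k) j) \<in> borel_measurable M" by simp
  qed (rule I)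
  then show ?case using X by (cases "k = 0") simp_all
qed (simp add: X)

lemma integrable_f_wavg_iterates:
  assumes "prob_space M" and sg_measurable: "sg \<in> borel_measurable borel" and X: "X \<in> borel_measurable M"
    and X_square_integrable: "integrable M (\<lambda>\<omega>. (norm (X \<omega>))\<^sup>2)"
  shows "integrable M (\<lambda>\<omega>. f (wavg (iterates (X \<omega>) c) t))"
proof -
  interpret prob_space M by fact
  obtain C where C: "\<And>\<xi> c. \<bar>f (wavg (iterates \<xi> c) t)\<bar> \<le> C * (1 + (norm \<xi>)\<^sup>2)"
    using abs_f_wavg_iterates_le_quadratic by blast
  show ?thesis
  proof (rule Bochner_Integration.integrable_bound)
    show "integrable M (\<lambda>\<omega>. C * (1 + (norm (X \<omega>))\<^sup>2))"
      using X_square_integrable by simp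
    show "(\<lambda>\<omega>. f (wavg (iterates (X \<omega>) c) t)) \<in> borel_measurable M"
      using measurable_compose[OF X f_wavg_iterates_measurable[OF sg_measurable]] .
    show "AE \<omega> in M. norm (f (wavg (iterates (X \<omega>) c) t)) \<le> norm (C * (1 + (norm (X \<omega>))\<^sup>2))"
    proof (rule AE_I2)
      fix \<omega>
      show "norm (f (wavg (iterates (X \<omega>) c) t)) \<le> norm (C * (1 + (norm (X \<omega>))\<^sup>2))"
        using C[of "X \<omega>" c] abs_ge_self[of "C * (1 + (norm (X \<omega>))\<^sup>2)"] by simp
    qed
  qed
qed

lemma expectation_f_wavg_eq_seq_avg:
  assumes "uniform_indices_indep M X I m" and sg_measurable: "sg \<in> borel_measurable borel"
    and X_square_integrable: "integrable M (\<lambda>\<omega>. (norm (X \<omega>))\<^sup>2)"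
  shows "prob_space.expectation M (\<lambda>\<omega>. f (wavg (iterates (X \<omega>) (\<lambda>l. I l \<omega>)) t))
    = prob_space.expectation M (\<lambda>\<omega>. seq_avg m t (\<lambda>c. f (wavg (iterates (X \<omega>) c) t)))"
proof -
  interpret uniform_indices_indep M X I m by fact
  have "(\<lambda>\<omega>. f (wavg (iterates (X \<omega>) (\<lambda>l. I l \<omega>)) t)) \<in> borel_measurable M"
    unfolding wavg_def
    by (intro measurable_compose[OF _ f_measurable] borel_measurable_scaleR borel_measurable_sum
        borel_measurable_const iterates_random_measurable sg_measurable X_measurable I_measurable)
  then show ?thesis
    using integrable_f_wavg_iterates[OF prob_space_axioms sg_measurable X_measurable X_square_integrable]
    by (intro expectation_eq_seq_avg[where \<Psi> = "\<lambda>c \<xi>. f (wavg (iterates \<xi> c) t)"]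
        f_wavg_iterates_measurable sg_measurable)
      (auto intro!: arg_cong[where f = f] wavg_cong iterates_cong)
qed

theorem expected_gap_bound:
  assumes indices: "uniform_indices_indep M X I m" and sg_measurable: "sg \<in> borel_measurable borel"
    and X_square_integrable: "integrable M (\<lambda>\<omega>. (norm (X \<omega>))\<^sup>2)"
  shows "\<exists>K. \<forall>t\<ge>1. \<bar>prob_space.expectation M (\<lambda>\<omega>. f (wavg (iterates (X \<omega>) (\<lambda>l. I l \<omega>)) t)) - f xopt\<bar>
    \<le> K * (1 + (\<gamma> t)\<^sup>2) / real t"
proof -
  interpret uniform_indices_indep M X I m by fact
  obtain K where K: "\<And>\<xi> T. 1 \<le> T \<Longrightarrow> \<bar>seq_avg m T (\<lambda>c. f (wavg (iterates \<xi> c) T)) - f xopt\<bar>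
      \<le> K * (1 + (norm \<xi>)\<^sup>2) * (1 + (\<gamma> T)\<^sup>2) / real T"
    using seq_avg_f_wavg_rate by blast
  define E where "E = expectation (\<lambda>\<omega>. 1 + (norm (X \<omega>))\<^sup>2)"
  have "\<bar>expectation (\<lambda>\<omega>. f (wavg (iterates (X \<omega>) (\<lambda>l. I l \<omega>)) t)) - f xopt\<bar>
      \<le> (K * E) * (1 + (\<gamma> t)\<^sup>2) / real t" if t: "1 \<le> t" for t
  proof -
    have integrable: "integrable M (\<lambda>\<omega>. seq_avg m t (\<lambda>c. f (wavg (iterates (X \<omega>) c) t)))"
      unfolding seq_avg_def
      using integrable_f_wavg_iterates[OF prob_space_axioms sg_measurable X_measurable X_square_integrable]
      by (intro integrable_divide_zero Bochner_Integration.integrable_sum)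
    have "\<bar>expectation (\<lambda>\<omega>. f (wavg (iterates (X \<omega>) (\<lambda>l. I l \<omega>)) t)) - f xopt\<bar>
        = \<bar>expectation (\<lambda>\<omega>. seq_avg m t (\<lambda>c. f (wavg (iterates (X \<omega>) c) t)) - f xopt)\<bar>"
      using integrable
      by (simp add: expectation_f_wavg_eq_seq_avg[OF indices sg_measurable X_square_integrable] prob_space)
    also have "\<dots> \<le> expectation (\<lambda>\<omega>. \<bar>seq_avg m t (\<lambda>c. f (wavg (iterates (X \<omega>) c) t)) - f xopt\<bar>)"
      by (rule integral_abs_bound)
    also have "\<dots> \<le> expectation (\<lambda>\<omega>. K * (1 + (norm (X \<omega>))\<^sup>2) * (1 + (\<gamma> t)\<^sup>2) / real t)"
      using integrable X_square_integrable K[OF t] by (intro integral_mono) auto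
    also have "\<dots> = (K * E) * (1 + (\<gamma> t)\<^sup>2) / real t" by (simp add: E_def)
    finally show ?thesis .
  qed
  then show ?thesis by blast
qed

end

theorem proposition19:
  fixes M :: "'w measure"
    and f :: "'a::euclidean_space \<Rightarrow> real"
    and sg :: "'a \<Rightarrow> 'a"
    and m :: nat and a :: "nat \<Rightarrow> 'a" and b :: "nat \<Rightarrow> real"
    and \<mu> M1 M2 d g :: real
    and s \<gamma> \<delta> :: "nat \<Rightarrow> real"
    and x :: "nat \<Rightarrow> 'w \<Rightarrow> 'a"
    and i :: "nat \<Rightarrow> 'w \<Rightarrow> nat"
  assumes "prob_space M"
    and m2: "m \<ge> 2"
    and a_nz: "\<And>j. j < m \<Longrightarrow> a j \<noteq> 0"
    and X_ne: "\<exists>y. \<forall>j<m. inner (a j) y - b j \<le> 0"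
    and mu_pos: "\<mu> > 0"
    and sconv: "strongly_convex_const f \<mu>"
    and M1: "M1 > 0" and M2: "M2 > 0"
    and growth: "\<And>y v. v \<in> subdifferential f y \<Longrightarrow> norm v \<le> M1 * norm y + M2"
    and sg_sub: "\<And>y. sg y \<in> subdifferential f y"
    and sg_meas: "sg \<in> borel_measurable borel"
    and s_def: "\<And>k. s k = 2 / (\<mu> * real k)"
    and d: "d > 1" and delta_def: "\<And>k. \<delta> k = 1 / real k powr d"
    and g: "g > 0" and gamma_def: "\<And>k. \<gamma> k = ln (real k) powr g"
    and x1_meas: "x 1 \<in> borel_measurable M"
    and x1_sq: "integrable M (\<lambda>\<omega>. (norm (x 1 \<omega>))\<^sup>2)"
    and i_meas: "\<And>k. i k \<in> measurable M (count_space UNIV)"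
    and i_unif: "\<And>k j. j < m \<Longrightarrow> measure M {\<omega> \<in> space M. i k \<omega> = j} = 1 / real m"
    and indep: "\<And>A n c. A \<in> sets borel \<Longrightarrow>
      measure M {\<omega> \<in> space M. x 1 \<omega> \<in> A \<and> (\<forall>l\<in>{1..n}. i l \<omega> = c l)}
      = measure M {\<omega> \<in> space M. x 1 \<omega> \<in> A}
        * (\<Prod>l\<in>{1..n}. measure M {\<omega> \<in> space M. i l \<omega> = c l})"
    and iter: "\<And>k \<omega>. k \<ge> 1 \<Longrightarrow>
      x (Suc k) \<omega> = x k \<omega> - s k *\<^sub>R (sg (x k \<omega>)
         + \<gamma> k *\<^sub>R hdelta_grad (\<delta> k) (x k \<omega>) (a (i k \<omega>)) (b (i k \<omega>)))"
  shows "(\<lambda>t. \<bar>prob_space.expectation M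
              (\<lambda>\<omega>. f ((1 / (\<Sum>k=1..t. 1 / s k)) *\<^sub>R (\<Sum>k=1..t. (1 / s k) *\<^sub>R x k \<omega>)))
            - Inf {f y | y. \<forall>j<m. inner (a j) y - b j \<le> 0}\<bar>)
         \<in> O(\<lambda>t. ln (real t) powr (2 * g) / real t)"
proof -
  have "1 \<le> m" using m2 by simp
  interpret random_incremental_penalty f sg m a b \<mu> M1 M2 d g s \<gamma> \<delta>
    by unfold_locales (fact \<open>1 \<le> m\<close> a_nz X_ne mu_pos sconv M1 M2 growth sg_sub s_def d delta_def
        g gamma_def)+
  have indices: "uniform_indices_indep M (x 1) i m"
    by (intro uniform_indices_indep.intro uniform_indices_indep_axioms.intro)
      (fact \<open>prob_space M\<close> \<open>1 \<le> m\<close> x1_meas i_meas i_unif indep)+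
  have wavg_x: "(1 / (\<Sum>k=1..t. 1 / s k)) *\<^sub>R (\<Sum>k=1..t. (1 / s k) *\<^sub>R x k \<omega>)
      = wavg (iterates (x 1 \<omega>) (\<lambda>l. i l \<omega>)) t" for t \<omega>
    unfolding wavg_def[symmetric] by (rule wavg_trajectory) (simp only: iter step_def)
  obtain K where K: "\<And>t. 1 \<le> t \<Longrightarrow> \<bar>prob_space.expectation M (\<lambda>\<omega>. f (wavg (iterates (x 1 \<omega>) (\<lambda>l. i l \<omega>)) t))
      - f xopt\<bar> \<le> K * (1 + (\<gamma> t)\<^sup>2) / real t"
    using expected_gap_bound[OF indices sg_meas x1_sq] by blast
  have "\<bar>prob_space.expectation M (\<lambda>\<omega>. f (wavg (iterates (x 1 \<omega>) (\<lambda>l. i l \<omega>)) t)) - f xopt\<bar>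
      \<le> 2 * \<bar>K\<bar> * norm (ln (real t) powr (2 * g) / real t)" if "3 \<le> t" for t
  proof -
    have "K * (1 + (\<gamma> t)\<^sup>2) / real t \<le> \<bar>K\<bar> * (2 * ln (real t) powr (2 * g)) / real t"
      using one_plus_\<gamma>_square_le[OF that] by (intro divide_right_mono mult_mono) auto
    also have "\<dots> = 2 * \<bar>K\<bar> * norm (ln (real t) powr (2 * g) / real t)" by simp
    finally show ?thesis using K[of t] that by simp
  qed
  then show ?thesis
    unfolding wavg_x Inf_feasible_eq by (intro bigoI eventually_at_top_linorderI) auto
qed

end
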